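(* Let $b>1$, let $P_n=\mathcal{E}(1)^{\otimes n}$, and for $\theta\in(0,1)$ let $Q_n$ be the law under which $X_1,\dots,X_n$ are independent, $X_1,\dots,X_{n-1}\sim\mathcal{E}(\theta)$ and $X_n\sim\mathcal{E}(1)$ (partial exponential tilting). Let $M_n=\frac1n\sum_{i=1}^nX_i$ and $B=[b,\infty)$. Then $(M_n,W_n)$ satisfies under $Q_n$ the LDP with good rate function $$J_Q(m,w)=m-w-\log\frac{w-\log\theta}{1-\theta}-1\quad\text{if } \frac{w-\log\theta}{1-\theta}\ge0 \text{ and } m-\frac{w-\log\theta}{1-\theta}\ge0,$$ and $J_Q(m,w)=+\infty$ otherwise; its unique zero is $(m^*,w^* )=(1/\theta,\,(1-\theta)/\theta+\log\theta)$. Moreover, $(Q_n)$ is asymptotically efficient for estimating $P_n(M_n\ge b)$ if and only if $\theta=1/b$ and $b\le2$; in the case $\theta=1/b$, the left derivative of $I_Q^B$ at $w^*$ equals $-1-\frac{1}{b-1}$.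
   Context: $\mathcal{E}(\theta)$ denotes the exponential distribution with density $\theta e^{-\theta x}$ on $x\ge0$ (mean $1/\theta$); $\mathcal{E}(1)^{\otimes n}$ is the law of $n$ i.i.d. $\mathcal{E}(1)$ variables $X_1,\dots,X_n$. $L_n=dP_n/dQ_n$, $W_n=-\frac1n\log L_n$. $I_Q^B(w)=\inf_{m\in\bar B}J_Q(m,w)$. $(Q_n)$ is asymptotically efficient if $R_Q(B):=\lim_n-\frac1n\log\mathbb{E}_Q[L_n^2\mathbf{1}_{M_n\in B}]$ exists and equals $2\lim_n-\frac1n\log P_n(M_n\in B)$. *)

theory Defs
  imports "HOL-Probability.Probability"
begin

definition eln :: "ennreal \<Rightarrow> ereal" where
  "eln x = (if x = 0 then - \<infinity> else if x = \<top> then \<infinity> else ereal (ln (enn2real x)))"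

definition good_rate_function :: "('a::topological_space \<Rightarrow> ereal) \<Rightarrow> bool" where
  "good_rate_function I \<longleftrightarrow>
     (\<forall>x. 0 \<le> I x) \<and> (\<forall>c::real. closed {x. I x \<le> ereal c}) \<and> (\<forall>c::real. compact {x. I x \<le> ereal c})"

definition LDP :: "(nat \<Rightarrow> 'a::topological_space measure) \<Rightarrow> ('a \<Rightarrow> ereal) \<Rightarrow> bool" where
  "LDP \<mu> I \<longleftrightarrow> good_rate_function I
     \<and> (\<forall>F. closed F \<longrightarrow>
          limsup (\<lambda>n. eln (emeasure (\<mu> n) F) / ereal (real n)) \<le> - (INF x\<in>F. I x))
     \<and> (\<forall>G. open G \<longrightarrow>
          - (INF x\<in>G. I x) \<le> liminf (\<lambda>n. eln (emeasure (\<mu> n) G) / ereal (real n)))"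

definition Pn :: "nat \<Rightarrow> (nat \<Rightarrow> real) measure" where
  "Pn n = PiM {..<n} (\<lambda>i. density lborel (\<lambda>x. ennreal (exponential_density 1 x)))"

text \<open>Q_n: coordinates 0..n-2 are E(\<theta>), coordinate n-1 (= X_n) is E(1).\<close>
definition Qn :: "real \<Rightarrow> nat \<Rightarrow> (nat \<Rightarrow> real) measure" where
  "Qn \<theta> n = PiM {..<n} (\<lambda>i. density lborel
       (\<lambda>x. ennreal (exponential_density (if i < n - 1 then \<theta> else 1) x)))"

definition Mn :: "nat \<Rightarrow> (nat \<Rightarrow> real) \<Rightarrow> real" where
  "Mn n x = (\<Sum>i<n. x i) / real n"

definition Ln :: "real \<Rightarrow> nat \<Rightarrow> (nat \<Rightarrow> real) \<Rightarrow> ennreal" where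
  "Ln \<theta> n = RN_deriv (Qn \<theta> n) (Pn n)"

definition Wn :: "real \<Rightarrow> nat \<Rightarrow> (nat \<Rightarrow> real) \<Rightarrow> real" where
  "Wn \<theta> n x = - ln (enn2real (Ln \<theta> n x)) / real n"

definition lawMW :: "real \<Rightarrow> nat \<Rightarrow> (real \<times> real) measure" where
  "lawMW \<theta> n = distr (Qn \<theta> n) borel (\<lambda>x. (Mn n x, Wn \<theta> n x))"

definition JQ :: "real \<Rightarrow> real \<times> real \<Rightarrow> ereal" where
  "JQ \<theta> p = (let m = fst p; w = snd p; u = (w - ln \<theta>) / (1 - \<theta>) in
     if 0 < u \<and> 0 \<le> m - u then ereal (m - w - ln u - 1) else \<infinity>)"

definition IQB :: "real \<Rightarrow> real \<Rightarrow> real \<Rightarrow> ereal" where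
  "IQB \<theta> b w = (INF m\<in>{b..}. JQ \<theta> (m, w))"

definition asymp_efficient :: "real \<Rightarrow> real \<Rightarrow> bool" where
  "asymp_efficient \<theta> b \<longleftrightarrow> (\<exists>r s.
     ((\<lambda>n. - eln (\<integral>\<^sup>+ x. (Ln \<theta> n x)\<^sup>2 * indicator {x. Mn n x \<in> {b..}} x \<partial>Qn \<theta> n)
              / ereal (real n)) \<longlongrightarrow> r) sequentially
   \<and> ((\<lambda>n. - eln (emeasure (Pn n) {x\<in>space (Pn n). Mn n x \<in> {b..}}) / ereal (real n))
              \<longlongrightarrow> s) sequentially
   \<and> r = 2 * s)"

end

theory Submission
  imports Defs "HOL-Real_Asymp.Real_Asymp"
begin

text \<open>Put \<open>A = (X\<^sub>1 + \<dots> + X\<^sub>n\<^sub>-\<^sub>1) / n\<close> and \<open>T = X\<^sub>n / n\<close>. Then \<open>M\<^sub>n = A + T\<close>, and since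
  \<open>L\<^sub>n = \<theta>\<^sup>1\<^sup>-\<^sup>n exp (-(1 - \<theta>) n A)\<close>, also \<open>W\<^sub>n = ln \<theta> + (1 - \<theta>) A + O(1/n)\<close>.
  Under \<open>Q\<^sub>n\<close> the variables \<open>A\<close> and \<open>T\<close> are independent Erlang and exponential variables,
  so \<open>(A, T)\<close> has an explicit density \<open>C\<^sub>n exp (-(n - 2) K(a, t)) h(a, t)\<close> with
  \<open>K(a, t) = \<theta>a - 1 - ln (\<theta>a) + t\<close>, an integrable weight \<open>h\<close> and \<open>ln C\<^sub>n = o(n)\<close>.
  Laplace's method for such integrals gives the LDP for \<open>(A, T)\<close> with rate \<open>K\<close>, and pushing it
  through the affine map \<open>(a, t) \<mapsto> (a + t, ln \<theta> + (1 - \<theta>) a)\<close> gives \<open>J\<^sub>Q\<close>.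
  The same method computes the exponent of \<open>P\<^sub>n(M\<^sub>n \<ge> b)\<close> (the case \<open>\<theta> = 1\<close>) and of the
  second moment \<open>E\<^sub>Q[L\<^sub>n\<^sup>2; M\<^sub>n \<ge> b]\<close>; comparing the two reduces, via \<open>x - 1 - ln x \<ge> 0\<close> with
  equality only at \<open>x = 1\<close>, to \<open>\<theta> b = 1\<close> and \<open>(1 - \<theta>) b \<le> 1\<close>.\<close>

section \<open>The rate function in the coordinates of A and T\<close>

text \<open>\<open>rate_AT\<close> is the rate function of \<open>(A, T)\<close> under \<open>Q\<^sub>n\<close>, the sum of the Cramer rates of a
  Gamma average with mean \<open>1/\<theta>\<close> and of \<open>X\<^sub>n / n\<close>; \<open>AT_to_MW\<close> is the limit of the map
  taking \<open>(A, T)\<close> to \<open>(M\<^sub>n, W\<^sub>n)\<close>.\<close>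

definition rate_AT :: "real \<Rightarrow> real \<times> real \<Rightarrow> real" where
  "rate_AT \<theta> p = \<theta> * fst p - 1 - ln (\<theta> * fst p) + snd p"

definition AT_to_MW :: "real \<Rightarrow> real \<times> real \<Rightarrow> real \<times> real" where
  "AT_to_MW \<theta> p = (fst p + snd p, ln \<theta> + (1 - \<theta>) * fst p)"

lemma ln_le_half: "0 < x \<Longrightarrow> ln x \<le> x / 2" for x :: real
  using ln_le_minus_one[of "x / 2"] ln_2_less_1 by (simp add: ln_div)

lemma rate_AT_nonneg: "0 < \<theta> \<Longrightarrow> 0 < fst p \<Longrightarrow> 0 \<le> snd p \<Longrightarrow> 0 \<le> rate_AT \<theta> p"
  using ln_le_minus_one[of "\<theta> * fst p"] by (simp add: rate_AT_def)

lemma continuous_on_AT_to_MW: "continuous_on S (AT_to_MW \<theta>)"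
  unfolding AT_to_MW_def by (intro continuous_intros)

lemma isCont_rate_AT: "0 < \<theta> \<Longrightarrow> 0 < fst p \<Longrightarrow> isCont (rate_AT \<theta>) p"
  unfolding rate_AT_def[abs_def] by (intro continuous_intros) auto

lemma JQ_AT_to_MW:
  assumes "0 < \<theta>" "\<theta> < 1" "0 < fst p" "0 \<le> snd p"
  shows "JQ \<theta> (AT_to_MW \<theta> p) = ereal (rate_AT \<theta> p)"
proof -
  have "(snd (AT_to_MW \<theta> p) - ln \<theta>) / (1 - \<theta>) = fst p"
    using assms by (simp add: AT_to_MW_def)
  then show ?thesis
    using assms by (simp add: JQ_def Let_def AT_to_MW_def rate_AT_def ln_mult algebra_simps)
qed

lemma JQ_finite_imp_AT_to_MW:
  assumes "0 < \<theta>" "\<theta> < 1" "JQ \<theta> q \<noteq> \<infinity>"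
  obtains p where "0 < fst p" "0 \<le> snd p" "q = AT_to_MW \<theta> p"
proof -
  obtain m w where q: "q = (m, w)" by fastforce
  define u where "u = (w - ln \<theta>) / (1 - \<theta>)"
  have "0 < u" "u \<le> m"
    using assms unfolding JQ_def q Let_def u_def by (auto split: if_splits)
  moreover have "w = ln \<theta> + (1 - \<theta>) * u"
    using assms by (simp add: u_def)
  ultimately show ?thesis
    by (intro that[of "(u, m - u)"]) (simp_all add: q AT_to_MW_def)
qed

lemma JQ_nonneg: assumes "0 < \<theta>" "\<theta> < 1" shows "0 \<le> JQ \<theta> q"
proof (cases "JQ \<theta> q = \<infinity>")
  case False
  then obtain p where "0 < fst p" "0 \<le> snd p" "q = AT_to_MW \<theta> p"
    using JQ_finite_imp_AT_to_MW assms by blast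
  then show ?thesis
    using JQ_AT_to_MW[OF assms] rate_AT_nonneg assms by simp
qed simp

lemma JQ_sublevel_eq_image:
  assumes "0 < \<theta>" "\<theta> < 1"
  shows "{q. JQ \<theta> q \<le> ereal c} = AT_to_MW \<theta> ` {p. 0 < fst p \<and> 0 \<le> snd p \<and> rate_AT \<theta> p \<le> c}"
proof (intro set_eqI iffI)
  fix q assume q: "q \<in> {q. JQ \<theta> q \<le> ereal c}"
  then have "JQ \<theta> q \<noteq> \<infinity>" by auto
  then obtain p where "0 < fst p" "0 \<le> snd p" "q = AT_to_MW \<theta> p"
    using JQ_finite_imp_AT_to_MW[OF assms] by blast
  then show "q \<in> AT_to_MW \<theta> ` {p. 0 < fst p \<and> 0 \<le> snd p \<and> rate_AT \<theta> p \<le> c}"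
    using JQ_AT_to_MW[OF assms] q by auto
qed (use JQ_AT_to_MW[OF assms] in auto)

lemma rate_AT_sublevel_bounds:
  assumes "0 < \<theta>" "0 < fst p" "0 \<le> snd p" "rate_AT \<theta> p \<le> c"
  shows "exp (- c - 1) / \<theta> \<le> fst p" "fst p \<le> 2 * (c + 1) / \<theta>" "snd p \<le> c + 1"
proof -
  let ?x = "\<theta> * fst p"
  have x: "0 < ?x" using assms by simp
  have K: "?x - 1 - ln ?x + snd p \<le> c" using assms(4) by (simp add: rate_AT_def)
  have "- c - 1 \<le> ln ?x" using K x assms(3) by linarith
  then have "exp (- c - 1) \<le> ?x" using x by (metis exp_le_cancel_iff exp_ln)
  then show "exp (- c - 1) / \<theta> \<le> fst p"
    using assms x by (simp add: field_simps)
  show "fst p \<le> 2 * (c + 1) / \<theta>"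
    using K ln_le_half[OF x] assms by (simp add: field_simps)
  show "snd p \<le> c + 1"
    using K ln_le_minus_one[OF x] by linarith
qed

lemma compact_rate_AT_sublevel:
  assumes "0 < \<theta>"
  shows "compact {p. 0 < fst p \<and> 0 \<le> snd p \<and> rate_AT \<theta> p \<le> c}" (is "compact ?S")
proof -
  define e where "e = exp (- c - 1) / \<theta>"
  have e: "0 < e" using assms by (simp add: e_def)
  \<comment> \<open>Away from the boundary \<open>fst p = 0\<close> the logarithm may be cut off at \<open>e\<close>, which makes closedness evident.\<close>
  have "?S = {p. e \<le> fst p} \<inter> {p. 0 \<le> snd p} \<inter>
      {p. \<theta> * fst p - 1 - ln (\<theta> * max (fst p) e) + snd p \<le> c}" (is "_ = ?S'")
  proof
    show "?S \<subseteq> ?S'"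
      using rate_AT_sublevel_bounds(1)[OF assms] by (force simp: e_def rate_AT_def max_def)
    show "?S' \<subseteq> ?S"
      using e by (auto simp: rate_AT_def max_def)
  qed
  then have "closed ?S"
    using e assms by (auto intro!: closed_Int closed_Collect_le continuous_intros)
  moreover have "?S \<subseteq> cbox (0, 0) (2 * (c + 1) / \<theta>, c + 1)"
    using rate_AT_sublevel_bounds[OF assms] by (auto simp: cbox_Pair_eq)
  ultimately show ?thesis
    using bounded_cbox bounded_subset compact_eq_bounded_closed by blast
qed

lemma good_rate_function_JQ:
  assumes "0 < \<theta>" "\<theta> < 1"
  shows "good_rate_function (JQ \<theta>)"
proof -
  have "compact {x. JQ \<theta> x \<le> ereal c}" for c
    unfolding JQ_sublevel_eq_image[OF assms]
    using assms by (intro compact_continuous_image continuous_on_AT_to_MW compact_rate_AT_sublevel)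
  then show ?thesis
    unfolding good_rate_function_def using JQ_nonneg[OF assms] compact_imp_closed by blast
qed

lemma JQ_eq_0_iff:
  assumes "0 < \<theta>" "\<theta> < 1"
  shows "JQ \<theta> (m, w) = 0 \<longleftrightarrow> (m, w) = (1 / \<theta>, (1 - \<theta>) / \<theta> + ln \<theta>)"
proof
  assume z: "JQ \<theta> (m, w) = 0"
  then obtain p where p: "0 < fst p" "0 \<le> snd p" "(m, w) = AT_to_MW \<theta> p"
    using JQ_finite_imp_AT_to_MW[OF assms, of "(m, w)"] by auto
  have K: "rate_AT \<theta> p = 0" using JQ_AT_to_MW[OF assms p(1,2)] p(3) z by simp
  have x: "0 < \<theta> * fst p" using assms p by simp
  have "ln (\<theta> * fst p) \<le> \<theta> * fst p - 1" using ln_le_minus_one[OF x] .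
  then have "ln (\<theta> * fst p) = \<theta> * fst p - 1" "snd p = 0"
    using K p(2) by (auto simp: rate_AT_def)
  then have "fst p = 1 / \<theta>" "snd p = 0"
    using ln_eq_minus_one[OF x] assms by (auto simp: field_simps)
  then show "(m, w) = (1 / \<theta>, (1 - \<theta>) / \<theta> + ln \<theta>)"
    using p(3) by (simp add: AT_to_MW_def)
next
  assume "(m, w) = (1 / \<theta>, (1 - \<theta>) / \<theta> + ln \<theta>)"
  then have "(m, w) = AT_to_MW \<theta> (1 / \<theta>, 0)"
    using assms by (simp add: AT_to_MW_def field_simps)
  then show "JQ \<theta> (m, w) = 0"
    using JQ_AT_to_MW[OF assms, of "(1 / \<theta>, 0)"] assms by (simp add: rate_AT_def)
qed

section \<open>The exponents of the tail probability and of the second moment\<close>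

definition tail_rate :: "real \<Rightarrow> real" where
  "tail_rate b = b - 1 - ln b"

text \<open>Up to a bounded factor, \<open>L\<^sub>n\<^sup>2\<close> equals \<open>exp (-2n ((1 - \<theta>) A + ln \<theta>))\<close>, which shifts
  the rate function of \<open>(A, T)\<close>.\<close>

definition second_moment_rate_AT :: "real \<Rightarrow> real \<times> real \<Rightarrow> real" where
  "second_moment_rate_AT \<theta> p = rate_AT \<theta> p + 2 * (1 - \<theta>) * fst p + 2 * ln \<theta>"

definition second_moment_rate :: "real \<Rightarrow> real \<Rightarrow> real" where
  "second_moment_rate \<theta> b =
    (if 1 \<le> b * (1 - \<theta>) then ln \<theta> + ln (1 - \<theta>) + b else ln \<theta> + (2 - \<theta>) * b - 1 - ln b)"

lemma second_moment_rate_AT_eq: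
  "0 < \<theta> \<Longrightarrow> 0 < a \<Longrightarrow> second_moment_rate_AT \<theta> (a, t) = (2 - \<theta>) * a - 1 + ln \<theta> - ln a + t"
  by (simp add: second_moment_rate_AT_def rate_AT_def ln_mult algebra_simps)

lemma isCont_second_moment_rate_AT: "0 < \<theta> \<Longrightarrow> 0 < fst p \<Longrightarrow> isCont (second_moment_rate_AT \<theta>) p"
  unfolding second_moment_rate_AT_def[abs_def] by (intro continuous_intros isCont_rate_AT)

lemma tail_rate_le_rate_AT:
  assumes "1 < b" "0 < a" "0 \<le> t" "b \<le> a + t"
  shows "tail_rate b \<le> rate_AT 1 (a, t)"
proof -
  have K: "rate_AT 1 (a, t) = a - 1 - ln a + t" by (simp add: rate_AT_def)
  show ?thesis
  proof (cases "b \<le> a")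
    case True
    have "ln a - ln b \<le> (a - b) / b" using ln_diff_le assms by simp
    also have "\<dots> \<le> (a - b) / 1" using True assms by (intro divide_left_mono) auto
    finally show ?thesis using assms K unfolding tail_rate_def by simp
  next
    case False
    then have "ln a \<le> ln b" using assms by simp
    then show ?thesis using assms K unfolding tail_rate_def by linarith
  qed
qed

lemma second_moment_rate_le:
  assumes "0 < \<theta>" "\<theta> < 1" "1 < b" "0 < a" "0 \<le> t" "b \<le> a + t"
  shows "second_moment_rate \<theta> b \<le> second_moment_rate_AT \<theta> (a, t)"
proof (cases "1 \<le> b * (1 - \<theta>)")
  case True
  have "ln ((1 - \<theta>) * a) \<le> (1 - \<theta>) * a - 1" using ln_le_minus_one assms by simp
  then have "1 + ln (1 - \<theta>) \<le> (1 - \<theta>) * a - ln a" using assms by (simp add: ln_mult)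
  then show ?thesis
    using True assms by (simp add: second_moment_rate_def second_moment_rate_AT_eq algebra_simps)
next
  case small: False
  show ?thesis
  proof (cases "b \<le> a")
    case True
    have "ln a - ln b \<le> (a - b) / b" using ln_diff_le assms by simp
    also have "\<dots> \<le> (a - b) / 1" using True assms by (intro divide_left_mono) auto
    also have "\<dots> \<le> (2 - \<theta>) * (a - b)"
      using True assms mult_right_mono[of 1 "2 - \<theta>" "a - b"] by simp
    finally show ?thesis
      using small assms by (simp add: second_moment_rate_def second_moment_rate_AT_eq algebra_simps)
  next
    case False
    have "ln b - ln a \<ge> (b - a) / b" using ln_diff_le[of a b] assms by (simp add: diff_divide_distrib)
    moreover have "(b - a) / b \<ge> (1 - \<theta>) * (b - a)"
      using False small assms mult_right_mono[of "(1 - \<theta>) * b" 1 "b - a"]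
      by (simp add: le_divide_eq algebra_simps)
    ultimately show ?thesis
      using small assms by (simp add: second_moment_rate_def second_moment_rate_AT_eq algebra_simps)
  qed
qed

lemma second_moment_rate_attained:
  assumes "0 < \<theta>" "\<theta> < 1" "1 < b"
  obtains a t where "0 < a" "0 \<le> t" "b \<le> a + t" "second_moment_rate_AT \<theta> (a, t) = second_moment_rate \<theta> b"
proof (cases "1 \<le> b * (1 - \<theta>)")
  case True
  let ?a = "1 / (1 - \<theta>)"
  have "?a \<le> b" using True assms by (simp add: field_simps)
  moreover have "second_moment_rate_AT \<theta> (a, b - a) = (1 - \<theta>) * a - 1 + ln \<theta> - ln a + b"
    if "0 < a" for a using that assms by (simp add: second_moment_rate_AT_eq algebra_simps)
  then have "second_moment_rate_AT \<theta> (?a, b - ?a) = (1 - \<theta>) * ?a - 1 + ln \<theta> - ln ?a + b"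
    using assms by simp
  moreover have "\<dots> = second_moment_rate \<theta> b"
    using True assms by (simp add: second_moment_rate_def ln_div)
  ultimately show ?thesis using assms by (intro that[of ?a "b - ?a"]) auto
next
  case False
  then show ?thesis
    using assms by (intro that[of b 0]) (simp_all add: second_moment_rate_AT_eq second_moment_rate_def)
qed

text \<open>Both cases reduce to sums of terms \<open>x - 1 - ln x \<ge> 0\<close>, which vanish only at \<open>x = 1\<close>.\<close>

lemma second_moment_rate_eq_twice_tail_rate_iff:
  assumes "0 < \<theta>" "\<theta> < 1" "1 < b"
  shows "second_moment_rate \<theta> b = 2 * tail_rate b \<longleftrightarrow> \<theta> = 1 / b \<and> b \<le> 2"
proof -
  define x y where "x = \<theta> * b" and "y = (1 - \<theta>) * b"
  have xy: "0 < x" "0 < y" using assms by (auto simp: x_def y_def)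
  have x1: "x = 1 \<longleftrightarrow> \<theta> = 1 / b" using assms by (auto simp: x_def field_simps)
  have gx: "ln x \<le> x - 1" "ln y \<le> y - 1" using ln_le_minus_one xy by auto
  have zx: "ln x = x - 1 \<longleftrightarrow> x = 1" "ln y = y - 1 \<longleftrightarrow> y = 1" using ln_eq_minus_one xy by auto
  have lx: "ln x = ln \<theta> + ln b" "ln y = ln (1 - \<theta>) + ln b"
    using assms by (simp_all add: x_def y_def ln_mult)
  have sum: "x + y = b" by (simp add: x_def y_def algebra_simps)
  show ?thesis
  proof (cases "1 \<le> y")
    case True
    have "second_moment_rate \<theta> b = ln \<theta> + ln (1 - \<theta>) + b"
      using True by (simp add: second_moment_rate_def y_def mult.commute)
    then have "second_moment_rate \<theta> b - 2 * tail_rate b = - ((x - 1 - ln x) + (y - 1 - ln y))"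
      unfolding tail_rate_def using lx sum by (simp add: algebra_simps)
    then have "second_moment_rate \<theta> b = 2 * tail_rate b \<longleftrightarrow> x = 1 \<and> y = 1"
      unfolding zx[symmetric] using gx by (intro iffI conjI) linarith+
    moreover have "x = 1 \<and> y = 1 \<longleftrightarrow> \<theta> = 1 / b \<and> b \<le> 2"
      using True assms x1 by (auto simp: x_def y_def field_simps)
    ultimately show ?thesis by simp
  next
    case False
    have "second_moment_rate \<theta> b = ln \<theta> + 2 * b - x - 1 - ln b"
      using False by (simp add: second_moment_rate_def x_def y_def algebra_simps)
    then have "second_moment_rate \<theta> b - 2 * tail_rate b = - (x - 1 - ln x)"
      unfolding tail_rate_def using lx by (simp add: algebra_simps)
    then have "second_moment_rate \<theta> b = 2 * tail_rate b \<longleftrightarrow> x = 1"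
      unfolding zx[symmetric] by linarith
    moreover have "x = 1 \<longleftrightarrow> \<theta> = 1 / b \<and> b \<le> 2"
      using False assms x1 by (auto simp: x_def y_def field_simps)
    ultimately show ?thesis by simp
  qed
qed

lemma IQB_eq_below_zero:
  assumes "1 < b" "\<theta> = 1 / b" "ln \<theta> < w" "w \<le> (1 - \<theta>) / \<theta> + ln \<theta>"
  shows "IQB \<theta> b w = ereal (b - w - ln ((w - ln \<theta>) / (1 - \<theta>)) - 1)"
proof -
  define u where "u = (w - ln \<theta>) / (1 - \<theta>)"
  have \<theta>: "0 < \<theta>" "\<theta> < 1" using assms by auto
  have "(1 - \<theta>) / \<theta> = b - 1" "1 - \<theta> = (b - 1) / b"
    unfolding assms(2) using assms(1) by (auto simp: field_simps)
  then have "u \<le> (b - 1) / (1 - \<theta>)"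
    using assms \<theta> unfolding u_def by (intro divide_right_mono) auto
  also have "\<dots> = b" using \<open>1 - \<theta> = (b - 1) / b\<close> assms by simp
  finally have "u \<le> b" .
  moreover have "0 < u" using assms \<theta> by (simp add: u_def)
  ultimately have J: "JQ \<theta> (m, w) = ereal (m - w - ln u - 1)" if "b \<le> m" for m
    using that by (simp add: JQ_def Let_def u_def)
  have "(INF m\<in>{b..}. JQ \<theta> (m, w)) = ereal (b - w - ln u - 1)"
  proof (rule antisym)
    show "(INF m\<in>{b..}. JQ \<theta> (m, w)) \<le> ereal (b - w - ln u - 1)"
      using J[of b] by (intro INF_lower2[of b]) auto
    show "ereal (b - w - ln u - 1) \<le> (INF m\<in>{b..}. JQ \<theta> (m, w))"
      using J by (intro INF_greatest) auto
  qed
  then show ?thesis by (simp add: IQB_def u_def)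
qed

lemma IQB_has_left_derivative:
  assumes "1 < b" "\<theta> = 1 / b"
  shows "((\<lambda>w. real_of_ereal (IQB \<theta> b w)) has_real_derivative (- 1 - 1 / (b - 1)))
           (at ((1 - \<theta>) / \<theta> + ln \<theta>) within {..(1 - \<theta>) / \<theta> + ln \<theta>})"
proof -
  have \<theta>: "0 < \<theta>" "\<theta> < 1" using assms by auto
  define w0 where "w0 = (1 - \<theta>) / \<theta> + ln \<theta>"
  have d0: "w0 - ln \<theta> = b - 1" unfolding w0_def assms(2) using assms(1) by (simp add: field_simps)
  define f where "f w = b - w - ln ((w - ln \<theta>) / (1 - \<theta>)) - 1" for w
  have "(f has_real_derivative (- 1 - (1 / (1 - \<theta>)) / ((w0 - ln \<theta>) / (1 - \<theta>)))) (at w0)"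
    unfolding f_def using \<theta> d0 assms by (auto intro!: derivative_eq_intros)
  moreover have "- 1 - (1 / (1 - \<theta>)) / ((w0 - ln \<theta>) / (1 - \<theta>)) = - 1 - 1 / (b - 1)"
    using \<theta> d0 by (simp add: field_simps)
  ultimately have "(f has_real_derivative (- 1 - 1 / (b - 1))) (at w0 within {..w0})"
    using has_field_derivative_at_within by metis
  \<comment> \<open>On \<open>(w0 - (b - 1), w0]\<close> the infimum is attained at \<open>m = b\<close>.\<close>
  then show ?thesis unfolding w0_def[symmetric]
  proof (rule has_field_derivative_transform_within[of _ _ _ _ "b - 1"])
    show "0 < b - 1" "w0 \<in> {..w0}" using assms by simp_all
    fix x assume x: "x \<in> {..w0}" "dist x w0 < b - 1"
    then have "ln \<theta> < x" using d0 by (auto simp: dist_real_def)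
    then show "f x = real_of_ereal (IQB \<theta> b x)"
      using IQB_eq_below_zero[OF assms, of x] x by (simp add: f_def w0_def)
  qed
qed

definition AT_density :: "real \<Rightarrow> nat \<Rightarrow> real \<times> real \<Rightarrow> real" where
  "AT_density \<theta> n p = erlang_density (n - 2) (real n * \<theta>) (fst p) * erlang_density 0 (real n) (snd p)"

definition AT_weight :: "real \<Rightarrow> real \<times> real \<Rightarrow> real" where
  "AT_weight \<theta> p = (if 0 < fst p \<and> 0 \<le> snd p then 4 * \<theta> * exp (- 2 * \<theta> * fst p - 2 * snd p) else 0)"

definition laplace_const :: "nat \<Rightarrow> real" where
  "laplace_const n = real n ^ n / (4 * exp (real n - 2) * fact (n - 2))"

lemma laplace_const_pos: "0 < laplace_const n"
  by (cases n) (auto simp: laplace_const_def)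

lemma AT_weight_nonneg: "0 < \<theta> \<Longrightarrow> 0 \<le> AT_weight \<theta> p"
  by (simp add: AT_weight_def)

lemma AT_weight_nonzero_imp: "AT_weight \<theta> p \<noteq> 0 \<Longrightarrow> 0 < fst p \<and> 0 \<le> snd p"
  by (auto simp: AT_weight_def split: if_splits)

lemma AT_weight_pos: "0 < \<theta> \<Longrightarrow> 0 < fst p \<Longrightarrow> 0 \<le> snd p \<Longrightarrow> 0 < AT_weight \<theta> p"
  by (simp add: AT_weight_def)

lemma borel_measurable_AT_weight[measurable]: "AT_weight \<theta> \<in> borel_measurable borel"
  unfolding AT_weight_def borel_prod[symmetric] by measurable

lemma borel_measurable_AT_density[measurable]: "(\<lambda>p. AT_density \<theta> n p) \<in> borel_measurable borel"
  unfolding AT_density_def borel_prod[symmetric] by measurable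

lemma open_positive_quadrant: "open {p :: real \<times> real. 0 < fst p \<and> 0 < snd p}"
proof -
  have "{p :: real \<times> real. 0 < fst p \<and> 0 < snd p} = fst -` {0<..} \<inter> snd -` {0<..}" by auto
  then show ?thesis by (simp add: open_Int open_vimage_fst open_vimage_snd)
qed

lemma isCont_AT_weight:
  assumes "0 < fst p" "0 < snd p"
  shows "isCont (AT_weight \<theta>) p"
proof -
  have "eventually (\<lambda>q. q \<in> {q. 0 < fst q \<and> 0 < snd q}) (nhds p)"
    using assms by (intro eventually_nhds_in_open open_positive_quadrant) simp
  then have "eventually (\<lambda>q. AT_weight \<theta> q = 4 * \<theta> * exp (- 2 * \<theta> * fst q - 2 * snd q)) (nhds p)"
    by eventually_elim (simp add: AT_weight_def)
  then show ?thesis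
    by (subst isCont_cong) (auto intro!: continuous_intros)
qed

lemma exp_nat_mult_rate_AT:
  assumes "0 < \<theta>" "0 < a"
  shows "exp (- real k * rate_AT \<theta> (a, t)) = exp (real k) * exp (- real k * \<theta> * a - real k * t) * (\<theta> * a) ^ k"
proof -
  have "exp (- real k * rate_AT \<theta> (a, t))
      = exp (real k) * exp (- real k * \<theta> * a - real k * t) * exp (real k * ln (\<theta> * a))"
    by (simp add: rate_AT_def exp_add[symmetric] algebra_simps)
  also have "exp (real k * ln (\<theta> * a)) = (\<theta> * a) ^ k"
    using assms by (simp add: exp_of_nat_mult)
  finally show ?thesis .
qed

text \<open>The exponent of the Erlang density of \<open>A\<close> is \<open>n - 2\<close>, so the rate function appears
  multiplied by \<open>n - 2\<close> and the leftover factors form \<open>AT_weight\<close>.\<close>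

lemma AT_density_eq:
  assumes "3 \<le> n" "0 < \<theta>"
  shows "AT_density \<theta> n p = laplace_const n * exp (- (real n - 2) * rate_AT \<theta> p) * AT_weight \<theta> p"
proof -
  define k where "k = n - 2"
  have n: "n = k + 2" "1 \<le> k" using assms by (auto simp: k_def)
  obtain a t where p: "p = (a, t)" by fastforce
  show ?thesis
  proof (cases "0 < a \<and> 0 \<le> t")
    case True
    note e = exp_nat_mult_rate_AT[OF assms(2) conjunct1[OF True], of k t]
    have alg: "(x * \<theta>) ^ (k + 1) * a ^ k * E1 / f * (x * E2) = x ^ (k + 2) * \<theta> * (\<theta> * a) ^ k / f * (E1 * E2)"
      for x E1 E2 f :: real
      by (simp add: power_mult_distrib algebra_simps)
    have ee: "exp (- real k * \<theta> * a - real k * t) * exp (- 2 * \<theta> * a - 2 * t)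
        = exp (- (real k + 2) * \<theta> * a) * exp (- (real k + 2) * t)"
      by (simp add: exp_add[symmetric] algebra_simps)
    have "real n - 2 = real k" using n by simp
    then have "laplace_const n * exp (- (real n - 2) * rate_AT \<theta> p) * AT_weight \<theta> p
        = laplace_const n * (exp (real k) * exp (- real k * \<theta> * a - real k * t) * (\<theta> * a) ^ k)
          * AT_weight \<theta> (a, t)"
      by (simp only: p e)
    also have "\<dots> = (real k + 2) ^ (k + 2) / (4 * exp (real k) * fact k)
          * (exp (real k) * exp (- real k * \<theta> * a - real k * t) * (\<theta> * a) ^ k)
          * (4 * \<theta> * exp (- 2 * \<theta> * a - 2 * t))"
      using True by (simp add: laplace_const_def AT_weight_def n add.commute)
    also have "\<dots> = (real k + 2) ^ (k + 2) * \<theta> * (\<theta> * a) ^ k / fact k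
          * (exp (- real k * \<theta> * a - real k * t) * exp (- 2 * \<theta> * a - 2 * t))"
      by (simp add: field_simps)
    also have "\<dots> = ((real k + 2) * \<theta>) ^ (k + 1) * a ^ k * exp (- (real k + 2) * \<theta> * a) / fact k
          * ((real k + 2) * exp (- (real k + 2) * t))"
      unfolding ee by (rule alg[symmetric])
    also have "\<dots> = AT_density \<theta> n p"
      using True by (simp add: AT_density_def p n erlang_density_def algebra_simps)
    finally show ?thesis ..
  next
    case False
    then show ?thesis using n p by (auto simp: AT_density_def AT_weight_def erlang_density_def)
  qed
qed

lemma nn_integral_erlang_density: "0 < l \<Longrightarrow> (\<integral>\<^sup>+x. ennreal (erlang_density k l x) \<partial>lborel) = 1"
  using prob_space.emeasure_space_1[OF prob_space_erlang_density] by (simp add: emeasure_density)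

lemma nn_integral_lborel_product:
  fixes f g :: "real \<Rightarrow> real"
  assumes [measurable]: "f \<in> borel_measurable borel" "g \<in> borel_measurable borel"
    and "\<And>x. 0 \<le> f x" "\<And>x. 0 \<le> g x"
  shows "(\<integral>\<^sup>+p. ennreal (f (fst p) * g (snd p)) \<partial>lborel) =
    (\<integral>\<^sup>+x. ennreal (f x) \<partial>lborel) * (\<integral>\<^sup>+y. ennreal (g y) \<partial>lborel)"
proof -
  have "(\<integral>\<^sup>+p. ennreal (f (fst p) * g (snd p)) \<partial>lborel) =
     (\<integral>\<^sup>+p. ennreal (f (fst p) * g (snd p)) \<partial>(lborel \<Otimes>\<^sub>M lborel))"
    by (simp add: lborel_prod)
  also have "\<dots> = (\<integral>\<^sup>+x. \<integral>\<^sup>+y. ennreal (f x * g y) \<partial>lborel \<partial>lborel)"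
    by (subst lborel.nn_integral_fst[symmetric]) auto
  also have "\<dots> = (\<integral>\<^sup>+x. ennreal (f x) * \<integral>\<^sup>+y. ennreal (g y) \<partial>lborel \<partial>lborel)"
    using assms by (simp add: ennreal_mult nn_integral_cmult)
  finally show ?thesis by (simp add: nn_integral_multc)
qed

lemma nn_integral_AT_density: "0 < \<theta> \<Longrightarrow> 0 < n \<Longrightarrow> (\<integral>\<^sup>+p. ennreal (AT_density \<theta> n p) \<partial>lborel) = 1"
  unfolding AT_density_def by (subst nn_integral_lborel_product) (auto simp: nn_integral_erlang_density)

lemma nn_integral_AT_weight_le_1:
  assumes "0 < \<theta>"
  shows "(\<integral>\<^sup>+p. ennreal (AT_weight \<theta> p) \<partial>lborel) \<le> 1"
proof -
  have "AT_weight \<theta> p \<le> erlang_density 0 (2 * \<theta>) (fst p) * erlang_density 0 2 (snd p)" for p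
    using assms by (auto simp: AT_weight_def erlang_density_def exp_add[symmetric] algebra_simps)
  then have "(\<integral>\<^sup>+p. ennreal (AT_weight \<theta> p) \<partial>lborel) \<le>
      (\<integral>\<^sup>+p. ennreal (erlang_density 0 (2 * \<theta>) (fst p) * erlang_density 0 2 (snd p)) \<partial>lborel)"
    by (intro nn_integral_mono ennreal_leI)
  also have "\<dots> = 1"
    using assms by (subst nn_integral_lborel_product) (auto simp: nn_integral_erlang_density)
  finally show ?thesis .
qed

text \<open>\<open>1 = \<integral> AT_density 1 n \<le> C\<^sub>n \<integral> AT_weight 1 \<le> C\<^sub>n\<close>, because \<open>rate_AT 1 \<ge> 0\<close>.\<close>

lemma laplace_const_ge_1:
  assumes "3 \<le> n"
  shows "1 \<le> laplace_const n"
proof -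
  have le: "ennreal (AT_density 1 n p) \<le> ennreal (laplace_const n) * ennreal (AT_weight 1 p)" for p
  proof (cases "AT_weight 1 p = 0")
    case False
    then have "0 \<le> (real n - 2) * rate_AT 1 p"
      using AT_weight_nonzero_imp rate_AT_nonneg assms by simp
    then have "- (real n - 2) * rate_AT 1 p \<le> 0" by (simp only: mult_minus_left neg_le_0_iff_le)
    then have "exp (- (real n - 2) * rate_AT 1 p) \<le> 1" by simp
    then have "AT_density 1 n p \<le> laplace_const n * AT_weight 1 p"
      unfolding AT_density_eq[OF assms zero_less_one]
      using laplace_const_pos[of n] AT_weight_nonneg[OF zero_less_one, of p]
      by (intro mult_right_mono mult_left_le) auto
    moreover have "ennreal (laplace_const n * AT_weight 1 p) = ennreal (laplace_const n) * ennreal (AT_weight 1 p)"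
      using laplace_const_pos[of n] by (simp add: ennreal_mult')
    ultimately show ?thesis by (metis ennreal_leI)
  qed (simp add: AT_density_eq[OF assms zero_less_one])
  have "1 = (\<integral>\<^sup>+p. ennreal (AT_density 1 n p) \<partial>lborel)"
    using nn_integral_AT_density[of 1 n] assms by simp
  also have "\<dots> \<le> ennreal (laplace_const n) * (\<integral>\<^sup>+p. ennreal (AT_weight 1 p) \<partial>lborel)"
    using le by (subst nn_integral_cmult[symmetric]) (auto intro: nn_integral_mono)
  also have "\<dots> \<le> ennreal (laplace_const n)"
    using nn_integral_AT_weight_le_1[of 1] mult_left_mono[of _ 1 "ennreal (laplace_const n)"] by simp
  finally show ?thesis by (simp add: ennreal_le_iff[symmetric])
qed

lemma power_le_exp_times_fact: "x ^ k \<le> exp x * fact k" if "0 \<le> x" for x :: real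
proof -
  have "sum (\<lambda>j. x ^ j /\<^sub>R fact j) {k} \<le> suminf (\<lambda>j. x ^ j /\<^sub>R fact j)"
    using exp_converges[of x] that by (intro sum_le_suminf) (auto simp: sums_iff)
  then have "x ^ k / fact k \<le> exp x"
    using exp_converges[of x] by (simp add: sums_iff divide_inverse mult.commute)
  then show ?thesis by (simp add: field_simps)
qed

lemma ln_laplace_const_bounds:
  assumes "3 \<le> n"
  shows "0 \<le> ln (laplace_const n)"
    "ln (laplace_const n) \<le> real n * ln (real n) - ln 4 - (real n - 2) * ln (real n - 2)"
proof -
  show "0 \<le> ln (laplace_const n)" using laplace_const_ge_1[OF assms] by simp
  define k where "k = n - 2"
  have n: "n = k + 2" "1 \<le> k" using assms by (auto simp: k_def)
  have kpos: "0 < real k ^ k" using n by simp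
  have "laplace_const n \<le> real n ^ n / (4 * real k ^ k)"
    unfolding laplace_const_def using power_le_exp_times_fact[of "real k" k] kpos n
    by (intro divide_left_mono) auto
  then have "ln (laplace_const n) \<le> ln (real n ^ n / (4 * real k ^ k))"
    using laplace_const_pos[of n] by simp
  also have "\<dots> = real n * ln (real n) - ln 4 - real k * ln (real k)"
    using assms kpos by (simp add: ln_div ln_mult ln_realpow)
  finally show "ln (laplace_const n) \<le> real n * ln (real n) - ln 4 - (real n - 2) * ln (real n - 2)"
    using n by (simp add: algebra_simps)
qed

lemma tendsto_ln_laplace_const: "((\<lambda>n. ln (laplace_const n) / real n) \<longlongrightarrow> 0) sequentially"
proof (rule tendsto_sandwich[of "\<lambda>n. 0" _ _
      "\<lambda>n. (real n * ln (real n) - ln 4 - (real n - 2) * ln (real n - 2)) / real n"])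
  show "eventually (\<lambda>n. 0 \<le> ln (laplace_const n) / real n) sequentially"
    using eventually_ge_at_top[of 3] by eventually_elim (use ln_laplace_const_bounds in simp)
  show "eventually (\<lambda>n. ln (laplace_const n) / real n \<le>
      (real n * ln (real n) - ln 4 - (real n - 2) * ln (real n - 2)) / real n) sequentially"
    using eventually_ge_at_top[of 3]
    by eventually_elim (use ln_laplace_const_bounds in \<open>auto intro: divide_right_mono\<close>)
  show "((\<lambda>n. (real n * ln (real n) - ln 4 - (real n - 2) * ln (real n - 2)) / real n) \<longlongrightarrow> 0) sequentially"
    by real_asymp
qed simp

section \<open>Laplace asymptotics\<close>

lemma eln_mono: assumes "x \<le> y" shows "eln x \<le> eln y"
proof (cases "x = 0 \<or> y = \<top>")
  case False
  then have "x \<noteq> \<top>" "y \<noteq> 0" using assms top.extremum_uniqueI by fastforce+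
  moreover from this have "0 < enn2real x"
    using False by (simp add: enn2real_positive_iff less_top zero_less_iff_neq_zero)
  moreover have "enn2real x \<le> enn2real y" using assms False by (simp add: enn2real_mono less_top)
  ultimately show ?thesis using False by (simp add: eln_def)
qed (auto simp: eln_def)

lemma eln_ennreal: "0 < y \<Longrightarrow> eln (ennreal y) = ereal (ln y)"
  by (simp add: eln_def)

lemma nn_integral_laplace_upper:
  fixes K h :: "'a \<Rightarrow> real"
  assumes "0 \<le> C" "0 \<le> k" "\<And>p. 0 \<le> h p" "h \<in> borel_measurable M"
    and "(\<integral>\<^sup>+p. ennreal (h p) \<partial>M) \<le> 1"
    and "\<And>p. p \<in> E \<Longrightarrow> h p \<noteq> 0 \<Longrightarrow> c \<le> K p"
  shows "(\<integral>\<^sup>+p. ennreal (C * exp (- k * K p) * h p) * indicator E p \<partial>M) \<le> ennreal (C * exp (- k * c))"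
proof -
  have "ennreal (C * exp (- k * K p) * h p) * indicator E p \<le> ennreal (C * exp (- k * c)) * ennreal (h p)" for p
  proof (cases "p \<in> E \<and> h p \<noteq> 0")
    case True
    then have "exp (- k * K p) \<le> exp (- k * c)" using assms by (simp add: mult_left_mono)
    then have "C * exp (- k * K p) * h p \<le> C * exp (- k * c) * h p"
      using assms by (intro mult_right_mono mult_left_mono) auto
    then show ?thesis using True assms by (simp add: ennreal_leI ennreal_mult[symmetric])
  qed auto
  then have "(\<integral>\<^sup>+p. ennreal (C * exp (- k * K p) * h p) * indicator E p \<partial>M)
      \<le> ennreal (C * exp (- k * c)) * (\<integral>\<^sup>+p. ennreal (h p) \<partial>M)"
    using assms(4) by (subst nn_integral_cmult[symmetric]) (auto intro: nn_integral_mono)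
  also have "\<dots> \<le> ennreal (C * exp (- k * c))"
    using assms(5) mult_left_mono[of _ 1 "ennreal (C * exp (- k * c))"] by simp
  finally show ?thesis .
qed

lemma emeasure_lborel_Times_interval:
  fixes a1 a2 t1 t2 :: real
  assumes "a1 \<le> a2" "t1 \<le> t2"
  shows "emeasure lborel ({a1..a2} \<times> {t1..t2}) = ennreal ((a2 - a1) * (t2 - t1))"
proof -
  have "emeasure (lborel :: (real \<times> real) measure) ({a1..a2} \<times> {t1..t2}) =
      emeasure (lborel \<Otimes>\<^sub>M lborel) ({a1..a2} \<times> {t1..t2})"
    by (simp add: lborel_prod)
  also have "\<dots> = emeasure lborel {a1..a2} * emeasure lborel {t1..t2}"
    by (rule lborel.emeasure_pair_measure_Times) auto
  finally show ?thesis using assms by (simp add: ennreal_mult)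
qed

lemma nn_integral_laplace_lower:
  fixes K h :: "real \<times> real \<Rightarrow> real"
  assumes box: "{a1..a2} \<times> {t1..t2} \<subseteq> E" "a1 \<le> a2" "t1 \<le> t2"
    and bnd: "\<And>p. p \<in> {a1..a2} \<times> {t1..t2} \<Longrightarrow> K p \<le> c \<and> \<kappa> \<le> h p"
    and "0 \<le> C" "0 \<le> \<kappa>" "0 \<le> k"
  shows "ennreal (C * exp (- k * c) * \<kappa> * ((a2 - a1) * (t2 - t1))) \<le>
     (\<integral>\<^sup>+p. ennreal (C * exp (- k * K p) * h p) * indicator E p \<partial>lborel)"
proof -
  let ?B = "{a1..a2} \<times> {t1..t2}"
  have "ennreal (C * exp (- k * c) * \<kappa> * ((a2 - a1) * (t2 - t1))) =
      ennreal (C * exp (- k * c) * \<kappa>) * emeasure lborel ?B"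
    using assms by (simp add: emeasure_lborel_Times_interval ennreal_mult)
  also have "\<dots> = (\<integral>\<^sup>+p. ennreal (C * exp (- k * c) * \<kappa>) * indicator ?B p \<partial>lborel)"
    by (rule nn_integral_cmult_indicator[symmetric]) (auto intro!: borel_closed closed_Times)
  also have "\<dots> \<le> (\<integral>\<^sup>+p. ennreal (C * exp (- k * K p) * h p) * indicator E p \<partial>lborel)"
  proof (intro nn_integral_mono)
    fix p
    show "ennreal (C * exp (- k * c) * \<kappa>) * indicator ?B p \<le> ennreal (C * exp (- k * K p) * h p) * indicator E p"
    proof (cases "p \<in> ?B")
      case True
      then have "K p \<le> c" "\<kappa> \<le> h p" using bnd by auto
      then have "C * exp (- k * c) * \<kappa> \<le> C * exp (- k * K p) * h p"
        using assms by (intro mult_mono mult_left_mono) (auto simp: mult_left_mono)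
      then show ?thesis using True box(1) by (auto simp: ennreal_leI)
    qed simp
  qed
  finally show ?thesis .
qed

lemma exists_box_near:
  fixes K h :: "real \<times> real \<Rightarrow> real"
  assumes "open U" "p0 \<in> U" "isCont K p0" "isCont h p0" "0 < h p0" "0 < \<epsilon>"
  obtains a1 a2 t1 t2 where "a1 < a2" "t1 < t2" "{a1..a2} \<times> {t1..t2} \<subseteq> U"
    "\<And>p. p \<in> {a1..a2} \<times> {t1..t2} \<Longrightarrow> K p \<le> K p0 + \<epsilon> \<and> h p0 / 2 \<le> h p"
proof -
  obtain d0 where d0: "0 < d0" "ball p0 d0 \<subseteq> U" using assms openE by blast
  obtain d1 where d1: "0 < d1" "\<And>p. dist p p0 < d1 \<Longrightarrow> dist (K p) (K p0) < \<epsilon>"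
    using assms(3,6) unfolding continuous_at_eps_delta by blast
  obtain d2 where d2: "0 < d2" "\<And>p. dist p p0 < d2 \<Longrightarrow> dist (h p) (h p0) < h p0 / 2"
    using assms(4,5) half_gt_zero unfolding continuous_at_eps_delta by blast
  define r where "r = min d0 (min d1 d2) / 4"
  have r: "0 < r" "2 * r < d0" "2 * r < d1" "2 * r < d2" using d0 d1 d2 by (auto simp: r_def)
  obtain a0 t0 where p0: "p0 = (a0, t0)" by fastforce
  have near: "dist p p0 < d" if "p \<in> {a0 - r..a0 + r} \<times> {t0 - r..t0 + r}" "2 * r < d" for p d
  proof -
    obtain a t where p: "p = (a, t)" by fastforce
    have "dist a a0 \<le> r" "dist t t0 \<le> r" using that p by (auto simp: dist_real_def)
    then have "sqrt ((dist a a0)\<^sup>2 + (dist t t0)\<^sup>2) \<le> 2 * r"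
      using sqrt_sum_squares_le_sum[of "dist a a0" "dist t t0"] by simp
    then show ?thesis using p p0 that by (simp add: dist_Pair_Pair)
  qed
  show ?thesis
  proof (rule that)
    show "a0 - r < a0 + r" "t0 - r < t0 + r" using r by auto
    show "{a0 - r..a0 + r} \<times> {t0 - r..t0 + r} \<subseteq> U"
      using near[of _ d0] r d0 by (auto simp: dist_commute subset_iff)
    fix p assume "p \<in> {a0 - r..a0 + r} \<times> {t0 - r..t0 + r}"
    then have "dist (K p) (K p0) < \<epsilon>" "dist (h p) (h p0) < h p0 / 2"
      using near d1 d2 r by auto
    then show "K p \<le> K p0 + \<epsilon> \<and> h p0 / 2 \<le> h p"
      unfolding dist_real_def abs_less_iff by linarith
  qed
qed

lemma ereal_divide_le_ereal: "x \<le> ereal a \<Longrightarrow> 0 < r \<Longrightarrow> x / ereal r \<le> ereal (a / r)"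
  using ereal_divide_right_mono[of x "ereal a" "ereal r"] by (simp add: ereal_divide)

lemma ereal_le_divide_ereal: "ereal a \<le> x \<Longrightarrow> 0 < r \<Longrightarrow> ereal (a / r) \<le> x / ereal r"
  using ereal_divide_right_mono[of "ereal a" x "ereal r"] by (simp add: ereal_divide)

lemma limsup_eln_le:
  assumes "eventually (\<lambda>n. X n \<le> ennreal (C n * exp (- (real n - 2) * c))) sequentially"
    and "\<And>n. 0 < C n" and "((\<lambda>n. ln (C n) / real n) \<longlongrightarrow> 0) sequentially"
  shows "limsup (\<lambda>n. eln (X n) / ereal (real n)) \<le> ereal (- c)"
proof -
  define u where "u n = (ln (C n) - (real n - 2) * c) / real n" for n
  have "((\<lambda>n. ln (C n) / real n + (- c + 2 * c / real n)) \<longlongrightarrow> 0 + (- c + 0)) sequentially"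
    using assms(3) by (intro tendsto_intros tendsto_divide_0[OF tendsto_const] filterlim_real_sequentially)
  moreover have "eventually (\<lambda>n. ln (C n) / real n + (- c + 2 * c / real n) = u n) sequentially"
    using eventually_ge_at_top[of 1] by eventually_elim (auto simp: u_def field_simps)
  ultimately have u: "(u \<longlongrightarrow> - c) sequentially" by (simp add: tendsto_cong)
  have "eventually (\<lambda>n. eln (X n) / ereal (real n) \<le> ereal (u n)) sequentially"
    using assms(1) eventually_ge_at_top[of 1]
  proof eventually_elim
    case (elim n)
    have "eln (X n) \<le> eln (ennreal (C n * exp (- (real n - 2) * c)))" by (rule eln_mono[OF elim(1)])
    also have "\<dots> = ereal (ln (C n) - (real n - 2) * c)"
      using assms(2)[of n] by (simp add: eln_ennreal ln_mult algebra_simps)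
    finally show ?case
      unfolding u_def using elim by (intro ereal_divide_le_ereal) auto
  qed
  then have "limsup (\<lambda>n. eln (X n) / ereal (real n)) \<le> limsup (\<lambda>n. ereal (u n))"
    by (rule Limsup_mono)
  also have "\<dots> = ereal (- c)"
    using u by (intro lim_imp_Limsup) (auto intro: tendsto_ereal)
  finally show ?thesis .
qed

lemma liminf_eln_ge:
  assumes "eventually (\<lambda>n. ennreal (C n * exp (- (real n - 2) * c) * \<kappa>) \<le> X n) sequentially"
    and "\<And>n. 0 < C n" and "((\<lambda>n. ln (C n) / real n) \<longlongrightarrow> 0) sequentially" and "0 < \<kappa>"
  shows "ereal (- c) \<le> liminf (\<lambda>n. eln (X n) / ereal (real n))"
proof -
  define u where "u n = (ln (C n) - (real n - 2) * c + ln \<kappa>) / real n" for n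
  have "((\<lambda>n. ln (C n) / real n + (- c + (2 * c + ln \<kappa>) / real n)) \<longlongrightarrow> 0 + (- c + 0)) sequentially"
    using assms(3) by (intro tendsto_intros tendsto_divide_0[OF tendsto_const] filterlim_real_sequentially)
  moreover have "eventually (\<lambda>n. ln (C n) / real n + (- c + (2 * c + ln \<kappa>) / real n) = u n) sequentially"
    using eventually_ge_at_top[of 1] by eventually_elim (auto simp: u_def field_simps)
  ultimately have u: "(u \<longlongrightarrow> - c) sequentially" by (simp add: tendsto_cong)
  have "eventually (\<lambda>n. ereal (u n) \<le> eln (X n) / ereal (real n)) sequentially"
    using assms(1) eventually_ge_at_top[of 1]
  proof eventually_elim
    case (elim n)
    have "ereal (ln (C n) - (real n - 2) * c + ln \<kappa>) = eln (ennreal (C n * exp (- (real n - 2) * c) * \<kappa>))"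
      using assms(2)[of n] assms(4) by (simp add: eln_ennreal ln_mult algebra_simps)
    also have "\<dots> \<le> eln (X n)" using elim by (intro eln_mono) auto
    finally show ?case
      unfolding u_def using elim by (intro ereal_le_divide_ereal) auto
  qed
  then have "liminf (\<lambda>n. ereal (u n)) \<le> liminf (\<lambda>n. eln (X n) / ereal (real n))"
    by (rule Liminf_mono)
  moreover have "liminf (\<lambda>n. ereal (u n)) = ereal (- c)"
    using u by (intro lim_imp_Liminf) (auto intro: tendsto_ereal)
  ultimately show ?thesis by simp
qed

lemma ereal_le_add_of_diff_le: "ereal (c - e) \<le> y \<Longrightarrow> ereal c \<le> y + ereal e"
  using add_right_mono[of "ereal (c - e)" y "ereal e"] by simp

text \<open>The lower bound only needs an open set of continuity points that eventually lies in the
  domains of integration \<open>E n\<close>, which may vary with \<open>n\<close>.\<close>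

lemma liminf_eln_laplace_lower:
  fixes K h :: "real \<times> real \<Rightarrow> real"
  assumes Cpos: "\<And>n. 0 < C n" and Clim: "((\<lambda>n. ln (C n) / real n) \<longlongrightarrow> 0) sequentially"
    and U: "open U" "p0 \<in> U" "isCont K p0" "isCont h p0" "0 < h p0"
    and X: "eventually (\<lambda>n. U \<subseteq> E n \<and> X n =
      (\<integral>\<^sup>+p. ennreal (C n * exp (- (real n - 2) * K p) * h p) * indicator (E n) p \<partial>lborel)) sequentially"
  shows "ereal (- K p0) \<le> liminf (\<lambda>n. eln (X n) / ereal (real n))"
proof (rule ereal_le_epsilon2)
  fix \<epsilon> :: real assume "0 < \<epsilon>"
  then obtain a1 a2 t1 t2 where B: "a1 < a2" "t1 < t2" "{a1..a2} \<times> {t1..t2} \<subseteq> U"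
    "\<And>p. p \<in> {a1..a2} \<times> {t1..t2} \<Longrightarrow> K p \<le> K p0 + \<epsilon> \<and> h p0 / 2 \<le> h p"
    using exists_box_near[OF U] by blast
  define \<kappa> where "\<kappa> = h p0 / 2 * ((a2 - a1) * (t2 - t1))"
  have "0 < \<kappa>" using B U by (simp add: \<kappa>_def)
  have "ereal (- (K p0 + \<epsilon>)) \<le> liminf (\<lambda>n. eln (X n) / ereal (real n))"
  proof (rule liminf_eln_ge[OF _ Cpos Clim \<open>0 < \<kappa>\<close>])
    show "eventually (\<lambda>n. ennreal (C n * exp (- (real n - 2) * (K p0 + \<epsilon>)) * \<kappa>) \<le> X n) sequentially"
      using X eventually_ge_at_top[of 2]
    proof eventually_elim
      case (elim n)
      have "ennreal (C n * exp (- (real n - 2) * (K p0 + \<epsilon>)) * (h p0 / 2) * ((a2 - a1) * (t2 - t1))) \<le> X n"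
        unfolding elim(1)[THEN conjunct2]
      proof (rule nn_integral_laplace_lower)
        show "{a1..a2} \<times> {t1..t2} \<subseteq> E n" using B(3) elim(1) by blast
        show "0 \<le> C n" using Cpos[of n] by simp
        show "0 \<le> real n - 2" using elim(2) by simp
      qed (use B U(5) in auto)
      then show ?case by (simp add: \<kappa>_def mult.assoc)
    qed
  qed
  then show "ereal (- K p0) \<le> liminf (\<lambda>n. eln (X n) / ereal (real n)) + ereal \<epsilon>"
    by (intro ereal_le_add_of_diff_le) simp
qed

lemma tendsto_eln_laplace:
  fixes K h :: "real \<times> real \<Rightarrow> real"
  assumes Cpos: "\<And>n. 0 < C n" and Clim: "((\<lambda>n. ln (C n) / real n) \<longlongrightarrow> 0) sequentially"
    and h: "\<And>p. 0 \<le> h p" "h \<in> borel_measurable lborel" "(\<integral>\<^sup>+p. ennreal (h p) \<partial>lborel) \<le> 1"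
    and upper: "\<And>p. p \<in> D \<Longrightarrow> h p \<noteq> 0 \<Longrightarrow> v \<le> K p"
    and lower: "\<And>\<epsilon>. 0 < \<epsilon> \<Longrightarrow> \<exists>p0 U. open U \<and> p0 \<in> U \<and> U \<subseteq> D \<and> isCont K p0 \<and> isCont h p0 \<and>
        0 < h p0 \<and> K p0 \<le> v + \<epsilon>"
    and X: "eventually (\<lambda>n. X n =
      (\<integral>\<^sup>+p. ennreal (C n * exp (- (real n - 2) * K p) * h p) * indicator D p \<partial>lborel)) sequentially"
  shows "((\<lambda>n. - eln (X n) / ereal (real n)) \<longlongrightarrow> ereal v) sequentially"
proof -
  let ?f = "\<lambda>n. eln (X n) / ereal (real n)"
  have "limsup ?f \<le> ereal (- v)"
  proof (rule limsup_eln_le[OF _ Cpos Clim])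
    show "eventually (\<lambda>n. X n \<le> ennreal (C n * exp (- (real n - 2) * v))) sequentially"
      using X eventually_ge_at_top[of 2]
    proof eventually_elim
      case (elim n)
      show ?case unfolding elim(1)
        by (rule nn_integral_laplace_upper) (use Cpos[of n] elim(2) h upper in auto)
    qed
  qed
  moreover have "ereal (- v) \<le> liminf ?f"
  proof (rule ereal_le_epsilon2)
    fix \<epsilon> :: real assume "0 < \<epsilon>"
    then obtain p0 U where U: "open U" "p0 \<in> U" "U \<subseteq> D" "isCont K p0" "isCont h p0"
        "0 < h p0" "K p0 \<le> v + \<epsilon>"
      using lower by blast
    have "ereal (- K p0) \<le> liminf ?f"
      using X U(3) by (intro liminf_eln_laplace_lower[OF Cpos Clim U(1,2,4-6), where E="\<lambda>_. D"]) auto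
    then have "ereal (- v - \<epsilon>) \<le> liminf ?f"
      using U(7) by (simp add: order_trans[rotated])
    then show "ereal (- v) \<le> liminf ?f + ereal \<epsilon>"
      by (rule ereal_le_add_of_diff_le)
  qed
  ultimately have "(?f \<longlongrightarrow> ereal (- v)) sequentially"
    using Liminf_le_Limsup[of sequentially ?f] by (intro Liminf_eq_Limsup) auto
  then have "((\<lambda>n. - ?f n) \<longlongrightarrow> - ereal (- v)) sequentially" by (rule tendsto_uminus_ereal)
  then show ?thesis by (simp add: divide_ereal_def)
qed

section \<open>The joint law of (A, T)\<close>

definition An :: "nat \<Rightarrow> (nat \<Rightarrow> real) \<Rightarrow> real" where
  "An n x = (\<Sum>i<n - 1. x i) / real n"

definition Tn :: "nat \<Rightarrow> (nat \<Rightarrow> real) \<Rightarrow> real" where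
  "Tn n x = x (n - 1) / real n"

lemma Mn_eq_An_plus_Tn: "1 \<le> n \<Longrightarrow> Mn n x = An n x + Tn n x"
  using sum.lessThan_Suc[of x "n - 1"] by (simp add: Mn_def An_def Tn_def add_divide_distrib)

definition Qn_marginal :: "real \<Rightarrow> nat \<Rightarrow> nat \<Rightarrow> real measure" where
  "Qn_marginal \<theta> n i = density lborel (\<lambda>x. ennreal (exponential_density (if i < n - 1 then \<theta> else 1) x))"

lemma Qn_eq_PiM: "Qn \<theta> n = PiM {..<n} (Qn_marginal \<theta> n)"
  unfolding Qn_def Qn_marginal_def ..

lemma sets_Qn_marginal[simp, measurable_cong]: "sets (Qn_marginal \<theta> n i) = sets borel"
  by (simp add: Qn_marginal_def)

lemma space_Qn_marginal[simp]: "space (Qn_marginal \<theta> n i) = UNIV"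
  by (simp add: Qn_marginal_def)

lemma prob_space_Qn_marginal: "0 < \<theta> \<Longrightarrow> prob_space (Qn_marginal \<theta> n i)"
  unfolding Qn_marginal_def by (rule prob_space_exponential_density) auto

lemma product_prob_space_Qn_marginal: "0 < \<theta> \<Longrightarrow> product_prob_space (Qn_marginal \<theta> n)"
  by (intro product_prob_spaceI prob_space_Qn_marginal)

lemma prob_space_Qn: "0 < \<theta> \<Longrightarrow> prob_space (Qn \<theta> n)"
proof -
  assume "0 < \<theta>"
  then interpret product_prob_space "Qn_marginal \<theta> n" "{..<n}" by (rule product_prob_space_Qn_marginal)
  show ?thesis unfolding Qn_eq_PiM by (rule prob_space_axioms)
qed

lemma sets_Qn[measurable_cong]: "sets (Qn \<theta> n) = sets (PiM {..<n} (\<lambda>i. borel))"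
  unfolding Qn_eq_PiM by (intro sets_PiM_cong) auto

lemma measurable_Qn_coordinate: "i < n \<Longrightarrow> (\<lambda>x. x i) \<in> Qn \<theta> n \<rightarrow>\<^sub>M borel"
  by (subst measurable_cong_sets[OF sets_Qn refl]) (auto intro!: measurable_component_singleton)

lemma borel_measurable_An[measurable]: "An n \<in> borel_measurable (Qn \<theta> n)"
  unfolding An_def by (subst measurable_cong_sets[OF sets_Qn refl]) measurable

lemma borel_measurable_Tn[measurable]: "Tn n \<in> borel_measurable (Qn \<theta> n)"
proof (cases "n = 0")
  case False
  then show ?thesis
    unfolding Tn_def by (intro borel_measurable_divide measurable_Qn_coordinate borel_measurable_const) simp
qed (unfold Tn_def, simp)

lemma distr_Qn_coordinate:
  assumes "0 < \<theta>" "i < n"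
  shows "distr (Qn \<theta> n) borel (\<lambda>x. x i) = Qn_marginal \<theta> n i"
proof -
  have "distr (Qn \<theta> n) borel (\<lambda>x. x i) = distr (PiM {..<n} (Qn_marginal \<theta> n)) (Qn_marginal \<theta> n i) (\<lambda>x. x i)"
    unfolding Qn_eq_PiM by (intro distr_cong) auto
  also have "\<dots> = Qn_marginal \<theta> n i"
    by (rule distr_PiM_component) (use assms prob_space_Qn_marginal in auto)
  finally show ?thesis .
qed

lemma distributed_Qn_coordinate:
  assumes "0 < \<theta>" "i < n"
  shows "distributed (Qn \<theta> n) lborel (\<lambda>x. x i)
     (\<lambda>x. ennreal (exponential_density (if i < n - 1 then \<theta> else 1) x))"
proof -
  have "distr (Qn \<theta> n) lborel (\<lambda>x. x i) = distr (Qn \<theta> n) borel (\<lambda>x. x i)"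
    by (intro distr_cong) auto
  then show ?thesis
    unfolding distributed_def using distr_Qn_coordinate[OF assms] measurable_Qn_coordinate[OF assms(2)]
    by (simp add: Qn_marginal_def)
qed

lemma indep_vars_Qn_coordinates:
  assumes "0 < \<theta>" "0 < n"
  shows "prob_space.indep_vars (Qn \<theta> n) (\<lambda>i. borel) (\<lambda>i x. x i) {..<n}"
proof -
  interpret prob_space "Qn \<theta> n" using prob_space_Qn[OF assms(1)] .
  show ?thesis
  proof (subst indep_vars_iff_distr_eq_PiM')
    show "{..<n} \<noteq> {}" using assms by auto
    show "random_variable borel (\<lambda>x. x i)" if "i \<in> {..<n}" for i
      using that measurable_Qn_coordinate by simp
    have "distr (Qn \<theta> n) (Pi\<^sub>M {..<n} (\<lambda>i. borel)) (\<lambda>x. \<lambda>i\<in>{..<n}. x i) =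
        distr (Qn \<theta> n) (Pi\<^sub>M {..<n} (\<lambda>i. borel)) (\<lambda>x. x)"
      by (intro distr_cong) (auto simp: Qn_eq_PiM space_PiM)
    also have "\<dots> = Qn \<theta> n" by (rule distr_id2) (simp add: sets_Qn)
    also have "\<dots> = Pi\<^sub>M {..<n} (\<lambda>i. distr (Qn \<theta> n) borel (\<lambda>x. x i))"
      unfolding Qn_eq_PiM by (intro PiM_cong) (auto simp: distr_Qn_coordinate[OF assms(1), unfolded Qn_eq_PiM])
    finally show "distr (Qn \<theta> n) (Pi\<^sub>M {..<n} (\<lambda>i. borel)) (\<lambda>x. \<lambda>i\<in>{..<n}. x i) =
        Pi\<^sub>M {..<n} (\<lambda>i. distr (Qn \<theta> n) borel (\<lambda>x. x i))" .
  qed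
qed

lemma indep_var_An_Tn:
  assumes "0 < \<theta>" "0 < n"
  shows "prob_space.indep_var (Qn \<theta> n) borel (An n) borel (Tn n)"
proof -
  interpret prob_space "Qn \<theta> n" using prob_space_Qn[OF assms(1)] .
  have "indep_var (PiM {..<n-1} (\<lambda>i. borel)) (\<lambda>x. \<lambda>i\<in>{..<n-1}. x i)
        (PiM {n-1} (\<lambda>i. borel)) (\<lambda>x. \<lambda>i\<in>{n-1}. x i)"
    using indep_var_restrict[OF indep_vars_Qn_coordinates[OF assms]] assms by auto
  then have "indep_var borel ((\<lambda>y. (\<Sum>i<n-1. y i) / real n) \<circ> (\<lambda>x. \<lambda>i\<in>{..<n-1}. x i))
     borel ((\<lambda>y. y (n-1) / real n) \<circ> (\<lambda>x. \<lambda>i\<in>{n-1}. x i))"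
    by (rule indep_var_compose) auto
  moreover have "(\<lambda>y. (\<Sum>i<n-1. y i) / real n) \<circ> (\<lambda>x. \<lambda>i\<in>{..<n-1}. x i) = An n"
    "(\<lambda>y. y (n-1) / real n) \<circ> (\<lambda>x. \<lambda>i\<in>{n-1}. x i) = Tn n"
    by (auto simp: An_def Tn_def fun_eq_iff)
  ultimately show ?thesis by simp
qed

lemma distributed_An:
  assumes "0 < \<theta>" "2 \<le> n"
  shows "distributed (Qn \<theta> n) lborel (An n) (\<lambda>x. ennreal (erlang_density (n - 2) (real n * \<theta>) x))"
proof -
  interpret prob_space "Qn \<theta> n" using prob_space_Qn[OF assms(1)] .
  have "distributed (Qn \<theta> n) lborel (\<lambda>x. \<Sum>i\<in>{..<n-1}. x i)
      (\<lambda>x. ennreal (erlang_density (card {..<n-1} - 1) \<theta> x))"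
  proof (rule exponential_distributed_sum)
    show "indep_vars (\<lambda>i. borel) (\<lambda>i x. x i) {..<n-1}"
      by (rule indep_vars_subset[OF indep_vars_Qn_coordinates]) (use assms in auto)
    have "0 \<in> {..<n-1}" using assms by simp
    then show "{..<n-1} \<noteq> {}" by blast
    fix i assume "i \<in> {..<n-1}"
    then show "distributed (Qn \<theta> n) lborel (\<lambda>x. x i) (\<lambda>x. ennreal (exponential_density \<theta> x))"
      using distributed_Qn_coordinate[OF assms(1), of i n] by auto
  qed (use assms in auto)
  then have "distributed (Qn \<theta> n) lborel (\<lambda>x. (1 / real n) * (\<Sum>i\<in>{..<n-1}. x i))
      (\<lambda>x. ennreal (erlang_density (card {..<n-1} - 1) (\<theta> / (1 / real n)) x))"
    by (rule erlang_distributed_mult_const) (use assms in auto)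
  moreover have "(\<lambda>x. (1 / real n) * (\<Sum>i\<in>{..<n-1}. x i)) = An n" by (auto simp: An_def fun_eq_iff)
  moreover have "card {..<n-1} - 1 = n - 2" by simp
  ultimately show ?thesis by (simp add: ac_simps)
qed

lemma distributed_Tn:
  assumes "0 < \<theta>" "0 < n"
  shows "distributed (Qn \<theta> n) lborel (Tn n) (\<lambda>x. ennreal (erlang_density 0 (real n) x))"
proof -
  interpret prob_space "Qn \<theta> n" using prob_space_Qn[OF assms(1)] .
  have "distributed (Qn \<theta> n) lborel (\<lambda>x. x (n-1)) (\<lambda>x. ennreal (erlang_density 0 1 x))"
    using distributed_Qn_coordinate[OF assms(1), of "n-1" n] assms by auto
  then have "distributed (Qn \<theta> n) lborel (\<lambda>x. (1 / real n) * x (n-1))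
      (\<lambda>x. ennreal (erlang_density 0 (1 / (1 / real n)) x))"
    by (rule erlang_distributed_mult_const) (use assms in auto)
  moreover have "(\<lambda>x. (1 / real n) * x (n-1)) = Tn n" by (auto simp: Tn_def fun_eq_iff)
  ultimately show ?thesis by simp
qed

lemma distr_An_Tn:
  assumes "0 < \<theta>" "2 \<le> n"
  shows "distr (Qn \<theta> n) borel (\<lambda>x. (An n x, Tn n x)) = density lborel (\<lambda>p. ennreal (AT_density \<theta> n p))"
proof -
  interpret prob_space "Qn \<theta> n" using prob_space_Qn[OF assms(1)] .
  define eA where "eA x = ennreal (erlang_density (n - 2) (real n * \<theta>) x)" for x
  define eT where "eT x = ennreal (erlang_density 0 (real n) x)" for x
  have "distr (Qn \<theta> n) borel (An n) = distr (Qn \<theta> n) lborel (An n)"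
    "distr (Qn \<theta> n) borel (Tn n) = distr (Qn \<theta> n) lborel (Tn n)"
    by (auto intro: distr_cong)
  then have dA: "distr (Qn \<theta> n) borel (An n) = density lborel eA"
    and dT: "distr (Qn \<theta> n) borel (Tn n) = density lborel eT"
    using distributed_An[OF assms] distributed_Tn[OF assms(1)] assms(2)
    by (simp_all add: distributed_def eA_def[abs_def] eT_def[abs_def])
  have "indep_var borel (An n) borel (Tn n)" using indep_var_An_Tn[OF assms(1)] assms(2) by simp
  then have "distr (Qn \<theta> n) borel (An n) \<Otimes>\<^sub>M distr (Qn \<theta> n) borel (Tn n)
      = distr (Qn \<theta> n) (borel \<Otimes>\<^sub>M borel) (\<lambda>x. (An n x, Tn n x))"
    using indep_var_distribution_eq by blast
  then have "distr (Qn \<theta> n) borel (\<lambda>x. (An n x, Tn n x))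
      = distr (Qn \<theta> n) borel (An n) \<Otimes>\<^sub>M distr (Qn \<theta> n) borel (Tn n)"
    by (simp add: borel_prod)
  also have "\<dots> = density (lborel \<Otimes>\<^sub>M lborel) (\<lambda>(x, y). eA x * eT y)"
    unfolding dA dT
  proof (rule pair_measure_density)
    show "sigma_finite_measure (density lborel eT)"
      unfolding eT_def using assms
      by (intro prob_space_imp_sigma_finite prob_space_erlang_density) auto
  qed (auto simp: eA_def[abs_def] eT_def[abs_def] lborel.sigma_finite_measure_axioms)
  also have "\<dots> = density (lborel \<Otimes>\<^sub>M lborel) (\<lambda>p. ennreal (AT_density \<theta> n p))"
  proof (rule density_cong)
    show "(\<lambda>(x, y). eA x * eT y) \<in> borel_measurable (lborel \<Otimes>\<^sub>M lborel)"
      unfolding eA_def eT_def by measurable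
    show "(\<lambda>p. ennreal (AT_density \<theta> n p)) \<in> borel_measurable (lborel \<Otimes>\<^sub>M lborel)"
      by (simp add: lborel_prod)
    show "AE p in lborel \<Otimes>\<^sub>M lborel. (case p of (x, y) \<Rightarrow> eA x * eT y) = ennreal (AT_density \<theta> n p)"
      using assms by (auto simp: AT_density_def eA_def eT_def ennreal_mult)
  qed
  finally show ?thesis by (simp add: lborel_prod)
qed

lemma nn_integral_Qn_An_Tn:
  assumes "0 < \<theta>" "2 \<le> n" "f \<in> borel_measurable borel"
  shows "(\<integral>\<^sup>+x. f (An n x, Tn n x) \<partial>Qn \<theta> n) = (\<integral>\<^sup>+p. ennreal (AT_density \<theta> n p) * f p \<partial>lborel)"
proof -
  have "(\<integral>\<^sup>+x. f (An n x, Tn n x) \<partial>Qn \<theta> n) = (\<integral>\<^sup>+p. f p \<partial>distr (Qn \<theta> n) borel (\<lambda>x. (An n x, Tn n x)))"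
    using assms(3) by (subst nn_integral_distr) (auto simp: borel_prod[symmetric])
  also have "\<dots> = (\<integral>\<^sup>+p. ennreal (AT_density \<theta> n p) * f p \<partial>lborel)"
    unfolding distr_An_Tn[OF assms(1,2)] using assms(3) by (subst nn_integral_density) auto
  finally show ?thesis .
qed

definition lr_factor :: "real \<Rightarrow> nat \<Rightarrow> nat \<Rightarrow> real \<Rightarrow> real" where
  "lr_factor \<theta> n i y = exponential_density 1 y / exponential_density (if i < n - 1 then \<theta> else 1) y"

definition lr :: "real \<Rightarrow> nat \<Rightarrow> (nat \<Rightarrow> real) \<Rightarrow> ennreal" where
  "lr \<theta> n x = (\<Prod>i<n. ennreal (lr_factor \<theta> n i (x i)))"

lemma borel_measurable_lr_factor[measurable]: "lr_factor \<theta> n i \<in> borel_measurable borel"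
  unfolding lr_factor_def by measurable

lemma borel_measurable_lr[measurable]: "lr \<theta> n \<in> borel_measurable (Qn \<theta> n)"
  unfolding lr_def by (subst measurable_cong_sets[OF sets_Qn refl]) measurable

lemma nn_integral_lr_factor:
  assumes "0 < \<theta>" "A \<in> sets borel"
  shows "(\<integral>\<^sup>+y. ennreal (lr_factor \<theta> n i y) * indicator A y \<partial>Qn_marginal \<theta> n i) =
    emeasure (density lborel (\<lambda>x. ennreal (exponential_density 1 x))) A"
proof -
  have "ennreal (exponential_density (if i < n - 1 then \<theta> else 1) y) * ennreal (lr_factor \<theta> n i y) =
      ennreal (exponential_density 1 y)" for y
    using assms by (cases "y < 0") (simp_all add: lr_factor_def exponential_density_def ennreal_mult[symmetric])
  then have "(\<integral>\<^sup>+y. ennreal (lr_factor \<theta> n i y) * indicator A y \<partial>Qn_marginal \<theta> n i) =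
      (\<integral>\<^sup>+y. ennreal (exponential_density 1 y) * indicator A y \<partial>lborel)"
    unfolding Qn_marginal_def using assms(2) by (subst nn_integral_density) (auto simp: mult.assoc[symmetric])
  then show ?thesis
    using assms(2) by (simp add: emeasure_density)
qed

text \<open>Both measures are products, so it suffices to compare them on boxes, where the
  integral of the product density factorises.\<close>

lemma Pn_eq_density_lr:
  assumes "0 < \<theta>"
  shows "Pn n = density (Qn \<theta> n) (lr \<theta> n)"
proof -
  interpret P: product_prob_space "\<lambda>i. density lborel (\<lambda>x. ennreal (exponential_density 1 x))" "{..<n}"
    by (intro product_prob_spaceI prob_space_exponential_density) simp
  interpret Q: product_prob_space "Qn_marginal \<theta> n" "{..<n}"
    using product_prob_space_Qn_marginal[OF assms] .
  have "density (Qn \<theta> n) (lr \<theta> n) = PiM {..<n} (\<lambda>i. density lborel (\<lambda>x. ennreal (exponential_density 1 x)))"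
  proof (rule P.PiM_eqI)
    show "sets (density (Qn \<theta> n) (lr \<theta> n)) =
        sets (PiM {..<n} (\<lambda>i. density lborel (\<lambda>x. ennreal (exponential_density 1 x))))"
      by (simp add: sets_Qn cong: sets_PiM_cong)
    fix A assume "\<And>i. i \<in> {..<n} \<Longrightarrow> A i \<in> sets (density lborel (\<lambda>x. ennreal (exponential_density 1 x)))"
    then have A: "\<And>i. i \<in> {..<n} \<Longrightarrow> A i \<in> sets borel" by simp
    have "Pi\<^sub>E {..<n} A \<in> sets (Qn \<theta> n)"
      unfolding Qn_eq_PiM by (rule sets_PiM_I_finite) (use A in auto)
    then have "emeasure (density (Qn \<theta> n) (lr \<theta> n)) (Pi\<^sub>E {..<n} A) =
        (\<integral>\<^sup>+x. lr \<theta> n x * indicator (Pi\<^sub>E {..<n} A) x \<partial>Qn \<theta> n)"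
      by (rule emeasure_density[OF borel_measurable_lr])
    also have "\<dots> = (\<integral>\<^sup>+x. (\<Prod>i<n. ennreal (lr_factor \<theta> n i (x i)) * indicator (A i) (x i)) \<partial>PiM {..<n} (Qn_marginal \<theta> n))"
      unfolding Qn_eq_PiM
    proof (intro nn_integral_cong)
      fix x assume "x \<in> space (PiM {..<n} (Qn_marginal \<theta> n))"
      then have "indicator (Pi\<^sub>E {..<n} A) x = (\<Prod>i<n. indicator (A i) (x i) :: ennreal)"
        by (auto simp: space_PiM indicator_def PiE_def Pi_def prod_ennreal)
      then show "lr \<theta> n x * indicator (Pi\<^sub>E {..<n} A) x = (\<Prod>i<n. ennreal (lr_factor \<theta> n i (x i)) * indicator (A i) (x i))"
        by (simp add: lr_def prod.distrib)
    qed
    also have "\<dots> = (\<Prod>i<n. \<integral>\<^sup>+y. ennreal (lr_factor \<theta> n i y) * indicator (A i) y \<partial>Qn_marginal \<theta> n i)"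
      by (rule Q.product_nn_integral_prod) (use A in auto)
    also have "\<dots> = (\<Prod>i<n. emeasure (density lborel (\<lambda>x. ennreal (exponential_density 1 x))) (A i))"
      using nn_integral_lr_factor[OF assms] A by simp
    finally show "emeasure (density (Qn \<theta> n) (lr \<theta> n)) (Pi\<^sub>E {..<n} A) =
        (\<Prod>i\<in>{..<n}. emeasure (density lborel (\<lambda>x. ennreal (exponential_density 1 x))) (A i))" .
  qed simp
  then show ?thesis by (simp add: Pn_def)
qed

lemma AE_lr_eq_Ln:
  assumes "0 < \<theta>"
  shows "AE x in Qn \<theta> n. lr \<theta> n x = Ln \<theta> n x"
proof -
  interpret prob_space "Qn \<theta> n" using prob_space_Qn[OF assms] .
  show ?thesis unfolding Ln_def
    by (rule RN_deriv_unique[OF borel_measurable_lr]) (simp add: Pn_eq_density_lr[OF assms])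
qed

lemma AE_Qn_nonneg:
  assumes "0 < \<theta>"
  shows "AE x in Qn \<theta> n. \<forall>i\<in>{..<n}. 0 \<le> x i"
proof -
  have "AE x in Qn \<theta> n. 0 \<le> x i" if "i < n" for i
  proof (rule AE_distrD[OF measurable_Qn_coordinate[OF that]])
    show "AE y in distr (Qn \<theta> n) borel (\<lambda>x. x i). 0 \<le> y"
      unfolding distr_Qn_coordinate[OF assms that] Qn_marginal_def
      by (subst AE_density) (auto simp: exponential_density_def)
  qed
  then show ?thesis by (subst AE_finite_all) auto
qed

lemma lr_eq:
  assumes "0 < \<theta>" "1 \<le> n" "\<forall>i\<in>{..<n}. 0 \<le> x i"
  shows "lr \<theta> n x = ennreal (exp (- (1 - \<theta>) * (real n * An n x)) / \<theta> ^ (n - 1))"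
proof -
  have "lr_factor \<theta> n i (x i) = exp (- (1 - \<theta>) * x i) / \<theta>" if "i < n - 1" for i
  proof -
    have "exp (- x i) = exp (- (1 - \<theta>) * x i) * exp (- (\<theta> * x i))"
      by (simp add: exp_add[symmetric] algebra_simps)
    moreover have "0 \<le> x i" using assms that by auto
    ultimately show ?thesis
      using assms that by (simp add: lr_factor_def exponential_density_def mult.commute not_less)
  qed
  moreover have "0 \<le> x (n - 1)" using assms by auto
  then have "lr_factor \<theta> n (n - 1) (x (n - 1)) = 1"
    by (simp add: lr_factor_def exponential_density_def)
  moreover have "(\<Prod>i<n. lr_factor \<theta> n i (x i)) = (\<Prod>i<n - 1. lr_factor \<theta> n i (x i)) * lr_factor \<theta> n (n - 1) (x (n - 1))"
    using assms prod.lessThan_Suc[of _ "n - 1"] by (metis Suc_diff_1 less_le_trans zero_less_one)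
  ultimately have "(\<Prod>i<n. lr_factor \<theta> n i (x i)) = (\<Prod>i<n - 1. exp (- (1 - \<theta>) * x i) / \<theta>)"
    by simp
  also have "\<dots> = exp (- (1 - \<theta>) * (\<Sum>i<n - 1. x i)) / \<theta> ^ (n - 1)"
    by (simp add: prod_dividef exp_sum[symmetric] sum_distrib_left)
  also have "(\<Sum>i<n - 1. x i) = real n * An n x"
    using assms by (simp add: An_def)
  finally show ?thesis
    unfolding lr_def using assms by (simp add: prod_ennreal lr_factor_def)
qed

definition AT_to_MW_n :: "real \<Rightarrow> nat \<Rightarrow> real \<times> real \<Rightarrow> real \<times> real" where
  "AT_to_MW_n \<theta> n p = (fst p + snd p, (real n - 1) / real n * ln \<theta> + (1 - \<theta>) * fst p)"

lemma borel_measurable_AT_to_MW_n[measurable]: "AT_to_MW_n \<theta> n \<in> borel_measurable borel"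
  unfolding AT_to_MW_n_def by (intro borel_measurable_continuous_onI continuous_intros)

lemma borel_measurable_Mn[measurable]: "Mn n \<in> borel_measurable (Qn \<theta> n)"
  unfolding Mn_def by (subst measurable_cong_sets[OF sets_Qn refl]) measurable

lemma borel_measurable_Wn[measurable]: "Wn \<theta> n \<in> borel_measurable (Qn \<theta> n)"
  unfolding Wn_def Ln_def by measurable

lemma AE_Ln_Mn_Wn:
  assumes "0 < \<theta>" "1 \<le> n"
  shows "AE x in Qn \<theta> n. Ln \<theta> n x = ennreal (exp (- (1 - \<theta>) * (real n * An n x)) / \<theta> ^ (n - 1))
     \<and> (Mn n x, Wn \<theta> n x) = AT_to_MW_n \<theta> n (An n x, Tn n x)"
  using AE_lr_eq_Ln[OF assms(1), of n] AE_Qn_nonneg[OF assms(1), of n]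
proof eventually_elim
  case (elim x)
  let ?L = "exp (- (1 - \<theta>) * (real n * An n x)) / \<theta> ^ (n - 1)"
  have L: "Ln \<theta> n x = ennreal ?L"
    using lr_eq[OF assms elim(2)] elim(1) by simp
  have "ln ?L = - (1 - \<theta>) * (real n * An n x) - (real n - 1) * ln \<theta>"
    using assms by (simp add: ln_div ln_realpow of_nat_diff)
  then have "Wn \<theta> n x = (real n - 1) / real n * ln \<theta> + (1 - \<theta>) * An n x"
    unfolding Wn_def L using assms by (simp add: field_simps)
  then show ?case using L Mn_eq_An_plus_Tn[OF assms(2)] by (simp add: AT_to_MW_n_def)
qed

lemma emeasure_lawMW:
  assumes "0 < \<theta>" "2 \<le> n" "F \<in> sets borel"
  shows "emeasure (lawMW \<theta> n) F = (\<integral>\<^sup>+p. ennreal (AT_density \<theta> n p) * indicator F (AT_to_MW_n \<theta> n p) \<partial>lborel)"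
proof -
  have [measurable]: "F \<in> sets borel" using assms(3) .
  have "emeasure (lawMW \<theta> n) F = (\<integral>\<^sup>+y. indicator F y \<partial>lawMW \<theta> n)"
    by (simp add: lawMW_def)
  also have "\<dots> = (\<integral>\<^sup>+x. indicator F (Mn n x, Wn \<theta> n x) \<partial>Qn \<theta> n)"
    unfolding lawMW_def by (subst nn_integral_distr) auto
  also have "\<dots> = (\<integral>\<^sup>+x. indicator F (AT_to_MW_n \<theta> n (An n x, Tn n x)) \<partial>Qn \<theta> n)"
    using AE_Ln_Mn_Wn[OF assms(1), of n] assms(2) by (intro nn_integral_cong_AE) auto
  also have "\<dots> = (\<integral>\<^sup>+p. ennreal (AT_density \<theta> n p) * indicator F (AT_to_MW_n \<theta> n p) \<partial>lborel)"
    using assms by (intro nn_integral_Qn_An_Tn) measurable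
  finally show ?thesis .
qed

lemma nn_integral_Ln_sq_tail:
  assumes "0 < \<theta>" "2 \<le> n"
  shows "(\<integral>\<^sup>+ x. (Ln \<theta> n x)\<^sup>2 * indicator {x. Mn n x \<in> {b..}} x \<partial>Qn \<theta> n) =
    (\<integral>\<^sup>+p. ennreal (AT_density \<theta> n p) * (ennreal ((exp (- (1 - \<theta>) * (real n * fst p)) / \<theta> ^ (n - 1))\<^sup>2)
        * indicator {p. b \<le> fst p + snd p} p) \<partial>lborel)"
proof -
  have "(\<integral>\<^sup>+ x. (Ln \<theta> n x)\<^sup>2 * indicator {x. Mn n x \<in> {b..}} x \<partial>Qn \<theta> n) =
     (\<integral>\<^sup>+ x. ennreal ((exp (- (1 - \<theta>) * (real n * An n x)) / \<theta> ^ (n - 1))\<^sup>2)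
        * indicator {p. b \<le> fst p + snd p} (An n x, Tn n x) \<partial>Qn \<theta> n)"
    using AE_Ln_Mn_Wn[OF assms(1), of n] assms
    by (intro nn_integral_cong_AE)
      (auto simp: ennreal_power indicator_def Mn_eq_An_plus_Tn elim!: eventually_mono)
  also have "\<dots> = (\<integral>\<^sup>+p. ennreal (AT_density \<theta> n p) * (ennreal ((exp (- (1 - \<theta>) * (real n * fst p)) / \<theta> ^ (n - 1))\<^sup>2)
        * indicator {p. b \<le> fst p + snd p} p) \<partial>lborel)"
    using assms by (subst nn_integral_Qn_An_Tn[symmetric]) (auto simp: borel_prod[symmetric])
  finally show ?thesis .
qed

lemma Pn_tail_eq_nn_integral:
  assumes "2 \<le> n"
  shows "emeasure (Pn n) {x \<in> space (Pn n). Mn n x \<in> {b..}} =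
    (\<integral>\<^sup>+p. ennreal (AT_density 1 n p) * indicator {p. b \<le> fst p + snd p} p \<partial>lborel)"
proof -
  have Pn: "Pn n = Qn 1 n" by (simp add: Pn_def Qn_def)
  have "emeasure (Pn n) {x \<in> space (Pn n). Mn n x \<in> {b..}} =
      (\<integral>\<^sup>+x. indicator {x \<in> space (Qn 1 n). Mn n x \<in> {b..}} x \<partial>Qn 1 n)"
    unfolding Pn by (rule nn_integral_indicator[symmetric]) measurable
  also have "\<dots> = (\<integral>\<^sup>+x. indicator {p. b \<le> fst p + snd p} (An n x, Tn n x) \<partial>Qn 1 n)"
    using assms by (intro nn_integral_cong) (auto simp: indicator_def Mn_eq_An_plus_Tn)
  also have "\<dots> = (\<integral>\<^sup>+p. ennreal (AT_density 1 n p) * indicator {p. b \<le> fst p + snd p} p \<partial>lborel)"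
    using assms by (intro nn_integral_Qn_An_Tn) (auto simp: borel_prod[symmetric])
  finally show ?thesis .
qed

section \<open>The large deviation principle\<close>

lemma emeasure_lawMW_laplace:
  assumes "0 < \<theta>" "3 \<le> n" "F \<in> sets borel"
  shows "emeasure (lawMW \<theta> n) F = (\<integral>\<^sup>+p. ennreal (laplace_const n * exp (- (real n - 2) * rate_AT \<theta> p) * AT_weight \<theta> p)
      * indicator {p. AT_to_MW_n \<theta> n p \<in> F} p \<partial>lborel)"
  using assms by (simp add: emeasure_lawMW AT_density_eq indicator_def)

lemma dist_AT_to_MW_n:
  assumes "0 < n"
  shows "dist (AT_to_MW_n \<theta> n p) (AT_to_MW \<theta> p) = \<bar>ln \<theta>\<bar> / real n"
proof -
  have "AT_to_MW_n \<theta> n p = (fst (AT_to_MW \<theta> p), snd (AT_to_MW \<theta> p) - ln \<theta> / real n)"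
    using assms by (simp add: AT_to_MW_n_def AT_to_MW_def field_simps)
  then show ?thesis by (simp add: dist_prod_def dist_real_def abs_divide)
qed

lemma eventually_abs_ln_div_less:
  assumes "0 < d"
  shows "eventually (\<lambda>n. \<bar>ln \<theta>\<bar> / real n < d) sequentially"
proof -
  have "((\<lambda>n. \<bar>ln \<theta>\<bar> / real n) \<longlongrightarrow> 0) sequentially"
    by (intro tendsto_divide_0[OF tendsto_const] filterlim_at_top_imp_at_infinity filterlim_real_sequentially)
  then show ?thesis using assms by (intro order_tendstoD(2)) auto
qed

lemma ereal_le_uminus_of_less:
  fixes L I :: ereal
  assumes "\<And>c. ereal c < I \<Longrightarrow> L \<le> ereal (- c)"
  shows "L \<le> - I"
proof (rule ccontr)
  assume "\<not> L \<le> - I"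
  then have "- I < L" by simp
  then obtain z where z: "- I < ereal z" "ereal z < L" using ereal_dense2 by blast
  then have "- ereal z < I" using ereal_uminus_less_reorder by blast
  then have "L \<le> ereal z" using assms[of "- z"] by simp
  then show False using z(2) by simp
qed

text \<open>For the upper bound, the compact image of a sublevel set of \<open>rate_AT\<close> has positive
  distance from \<open>F\<close>, which eventually exceeds the shift \<open>\<bar>ln \<theta>\<bar> / n\<close> between
  \<open>AT_to_MW_n\<close> and \<open>AT_to_MW\<close>.\<close>

lemma LDP_upper_bound:
  assumes \<theta>: "0 < \<theta>" "\<theta> < 1" and "closed F"
  shows "limsup (\<lambda>n. eln (emeasure (lawMW \<theta> n) F) / ereal (real n)) \<le> - (INF x\<in>F. JQ \<theta> x)"
proof (rule ereal_le_uminus_of_less)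
  fix c assume c: "ereal c < (INF x\<in>F. JQ \<theta> x)"
  define S where "S = {p. 0 < fst p \<and> 0 \<le> snd p \<and> rate_AT \<theta> p \<le> c}"
  have "compact (AT_to_MW \<theta> ` S)"
    unfolding S_def using \<theta> by (intro compact_continuous_image continuous_on_AT_to_MW compact_rate_AT_sublevel)
  moreover have "AT_to_MW \<theta> ` S \<inter> F = {}"
  proof (rule ccontr)
    assume "AT_to_MW \<theta> ` S \<inter> F \<noteq> {}"
    then obtain p where p: "p \<in> S" "AT_to_MW \<theta> p \<in> F" by blast
    then have "(INF x\<in>F. JQ \<theta> x) \<le> JQ \<theta> (AT_to_MW \<theta> p)" by (intro INF_lower)
    also have "\<dots> = ereal (rate_AT \<theta> p)" using JQ_AT_to_MW[OF \<theta>] p(1) by (simp add: S_def)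
    also have "\<dots> \<le> ereal c" using p(1) by (simp add: S_def)
    finally show False using c by simp
  qed
  ultimately obtain d where d: "0 < d" "\<And>x y. x \<in> AT_to_MW \<theta> ` S \<Longrightarrow> y \<in> F \<Longrightarrow> d \<le> dist x y"
    using separate_compact_closed[OF _ \<open>closed F\<close>] by metis
  show "limsup (\<lambda>n. eln (emeasure (lawMW \<theta> n) F) / ereal (real n)) \<le> ereal (- c)"
  proof (rule limsup_eln_le[OF _ laplace_const_pos tendsto_ln_laplace_const])
    show "eventually (\<lambda>n. emeasure (lawMW \<theta> n) F \<le> ennreal (laplace_const n * exp (- (real n - 2) * c))) sequentially"
      using eventually_abs_ln_div_less[OF d(1), of \<theta>] eventually_ge_at_top[of 3]
    proof eventually_elim
      case (elim n)
      have "c \<le> rate_AT \<theta> p" if "AT_to_MW_n \<theta> n p \<in> F" "AT_weight \<theta> p \<noteq> 0" for p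
      proof (rule ccontr)
        assume "\<not> c \<le> rate_AT \<theta> p"
        then have "p \<in> S" using AT_weight_nonzero_imp[OF that(2)] by (simp add: S_def)
        then show False
          using d(2)[of "AT_to_MW \<theta> p" "AT_to_MW_n \<theta> n p"] that(1) elim dist_AT_to_MW_n[of n]
          by (simp add: dist_commute)
      qed
      then show ?case
        unfolding emeasure_lawMW_laplace[OF \<theta>(1) elim(2) borel_closed[OF \<open>closed F\<close>]]
        using laplace_const_pos[of n] elim(2) AT_weight_nonneg[OF \<theta>(1)] nn_integral_AT_weight_le_1[OF \<theta>(1)]
        by (intro nn_integral_laplace_upper) auto
    qed
  qed
qed

lemma liminf_lawMW_ge_interior:
  assumes \<theta>: "0 < \<theta>" "\<theta> < 1" and "open G"
    and p: "0 < fst p" "0 < snd p" "AT_to_MW \<theta> p \<in> G"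
  shows "ereal (- rate_AT \<theta> p) \<le> liminf (\<lambda>n. eln (emeasure (lawMW \<theta> n) G) / ereal (real n))"
proof -
  define q where "q = AT_to_MW \<theta> p"
  obtain \<rho> where \<rho>: "0 < \<rho>" "ball q \<rho> \<subseteq> G" using \<open>open G\<close> p(3) openE by (auto simp: q_def)
  define U where "U = AT_to_MW \<theta> -` ball q (\<rho> / 2) \<inter> {p. 0 < fst p \<and> 0 < snd p}"
  have "open U" unfolding U_def
    by (intro open_Int open_positive_quadrant open_vimage[OF open_ball continuous_on_AT_to_MW])
  moreover have "p \<in> U" using p \<rho> by (simp add: U_def q_def)
  moreover have "eventually (\<lambda>n. U \<subseteq> {p. AT_to_MW_n \<theta> n p \<in> G} \<and> emeasure (lawMW \<theta> n) G =
      (\<integral>\<^sup>+p. ennreal (laplace_const n * exp (- (real n - 2) * rate_AT \<theta> p) * AT_weight \<theta> p)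
         * indicator {p. AT_to_MW_n \<theta> n p \<in> G} p \<partial>lborel)) sequentially"
    using eventually_abs_ln_div_less[OF half_gt_zero[OF \<rho>(1)], of \<theta>] eventually_ge_at_top[of 3]
  proof eventually_elim
    case (elim n)
    have "AT_to_MW_n \<theta> n p' \<in> ball q \<rho>" if "p' \<in> U" for p'
    proof -
      have "dist (AT_to_MW \<theta> p') q < \<rho> / 2" using that by (simp add: U_def dist_commute)
      moreover have "dist (AT_to_MW_n \<theta> n p') (AT_to_MW \<theta> p') < \<rho> / 2"
        using elim dist_AT_to_MW_n[of n \<theta> p'] by simp
      ultimately show ?thesis
        using dist_triangle[of "AT_to_MW_n \<theta> n p'" q "AT_to_MW \<theta> p'"] by (simp add: dist_commute)
    qed
    then show ?case
      using \<rho>(2) emeasure_lawMW_laplace[OF \<theta>(1) elim(2) borel_open[OF \<open>open G\<close>]] by auto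
  qed
  ultimately show ?thesis
    using p \<theta>(1)
    by (intro liminf_eln_laplace_lower[OF laplace_const_pos tendsto_ln_laplace_const])
      (auto intro!: isCont_rate_AT isCont_AT_weight AT_weight_pos)
qed

text \<open>A point \<open>p\<^sub>0\<close> on the boundary \<open>t = 0\<close>, where \<open>AT_weight\<close> is discontinuous, is
  approximated by the interior points \<open>(fst p\<^sub>0, snd p\<^sub>0 + \<eta>)\<close>.\<close>

lemma LDP_lower_bound:
  assumes \<theta>: "0 < \<theta>" "\<theta> < 1" and "open G"
  shows "- (INF x\<in>G. JQ \<theta> x) \<le> liminf (\<lambda>n. eln (emeasure (lawMW \<theta> n) G) / ereal (real n))"
proof -
  let ?Y = "liminf (\<lambda>n. eln (emeasure (lawMW \<theta> n) G) / ereal (real n))"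
  have "- JQ \<theta> q \<le> ?Y" if "q \<in> G" for q
  proof (cases "JQ \<theta> q = \<infinity>")
    case False
    then obtain p0 where p0: "0 < fst p0" "0 \<le> snd p0" "q = AT_to_MW \<theta> p0"
      using JQ_finite_imp_AT_to_MW[OF \<theta>] by blast
    obtain \<rho> where \<rho>: "0 < \<rho>" "ball q \<rho> \<subseteq> G" using \<open>open G\<close> \<open>q \<in> G\<close> openE by blast
    have "ereal (- rate_AT \<theta> p0) \<le> ?Y"
    proof (rule ereal_le_epsilon2)
      fix \<epsilon> :: real assume "0 < \<epsilon>"
      define \<eta> where "\<eta> = min \<epsilon> (\<rho> / 2)"
      have \<eta>: "0 < \<eta>" "\<eta> \<le> \<epsilon>" "\<eta> < \<rho>" using \<open>0 < \<epsilon>\<close> \<rho> by (auto simp: \<eta>_def)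
      have "AT_to_MW \<theta> (fst p0, snd p0 + \<eta>) \<in> ball q \<rho>"
        using \<eta> p0(3) by (simp add: AT_to_MW_def dist_prod_def dist_real_def)
      then have "ereal (- rate_AT \<theta> (fst p0, snd p0 + \<eta>)) \<le> ?Y"
        using p0 \<eta>(1) \<rho>(2) by (intro liminf_lawMW_ge_interior[OF \<theta> \<open>open G\<close>]) auto
      moreover have "rate_AT \<theta> (fst p0, snd p0 + \<eta>) = rate_AT \<theta> p0 + \<eta>" by (simp add: rate_AT_def)
      ultimately have "ereal (- rate_AT \<theta> p0 - \<epsilon>) \<le> ?Y"
        using \<eta>(2) by (simp add: order_trans[rotated])
      then show "ereal (- rate_AT \<theta> p0) \<le> ?Y + ereal \<epsilon>"
        by (rule ereal_le_add_of_diff_le)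
    qed
    then show ?thesis using JQ_AT_to_MW[OF \<theta> p0(1,2)] p0(3) by simp
  qed simp
  then have "- ?Y \<le> (INF x\<in>G. JQ \<theta> x)"
    by (intro INF_greatest) (simp add: ereal_uminus_le_reorder)
  then show ?thesis by (simp add: ereal_uminus_le_reorder)
qed

lemma LDP_lawMW: "0 < \<theta> \<Longrightarrow> \<theta> < 1 \<Longrightarrow> LDP (lawMW \<theta>) (JQ \<theta>)"
  unfolding LDP_def using good_rate_function_JQ LDP_upper_bound LDP_lower_bound by blast

section \<open>Asymptotic efficiency\<close>

lemma open_tail_region: "open {p :: real \<times> real. b < fst p + snd p \<and> 0 < fst p \<and> 0 < snd p}"
proof -
  have "{p :: real \<times> real. b < fst p + snd p \<and> 0 < fst p \<and> 0 < snd p} =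
     (\<lambda>p. fst p + snd p) -` {b<..} \<inter> {p. 0 < fst p \<and> 0 < snd p}" by auto
  moreover have "open ((\<lambda>p::real \<times> real. fst p + snd p) -` {b<..})"
    by (intro open_vimage) (auto intro!: continuous_intros)
  ultimately show ?thesis using open_positive_quadrant by (simp add: open_Int)
qed

lemma tendsto_Pn_tail:
  assumes "1 < b"
  shows "((\<lambda>n. - eln (emeasure (Pn n) {x \<in> space (Pn n). Mn n x \<in> {b..}}) / ereal (real n))
    \<longlongrightarrow> ereal (tail_rate b)) sequentially"
proof (rule tendsto_eln_laplace[OF laplace_const_pos tendsto_ln_laplace_const,
      where K = "rate_AT 1" and h = "AT_weight 1" and D = "{p. b \<le> fst p + snd p}"])
  show "\<And>p. 0 \<le> AT_weight 1 p" "AT_weight 1 \<in> borel_measurable lborel"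
    "(\<integral>\<^sup>+p. ennreal (AT_weight 1 p) \<partial>lborel) \<le> 1"
    by (simp_all add: AT_weight_nonneg nn_integral_AT_weight_le_1)
  show "tail_rate b \<le> rate_AT 1 p" if "p \<in> {p. b \<le> fst p + snd p}" "AT_weight 1 p \<noteq> 0" for p
    using that tail_rate_le_rate_AT[OF assms, of "fst p" "snd p"] AT_weight_nonzero_imp by auto
  fix \<epsilon> :: real assume "0 < \<epsilon>"
  then show "\<exists>p0 U. open U \<and> p0 \<in> U \<and> U \<subseteq> {p. b \<le> fst p + snd p} \<and> isCont (rate_AT 1) p0 \<and>
      isCont (AT_weight 1) p0 \<and> 0 < AT_weight 1 p0 \<and> rate_AT 1 p0 \<le> tail_rate b + \<epsilon>"
    using assms open_tail_region[of b]
    by (intro exI[of _ "(b, \<epsilon>)"] exI[of _ "{p. b < fst p + snd p \<and> 0 < fst p \<and> 0 < snd p}"])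
      (auto simp: rate_AT_def tail_rate_def intro!: isCont_rate_AT isCont_AT_weight AT_weight_pos)
next
  show "eventually (\<lambda>n. emeasure (Pn n) {x \<in> space (Pn n). Mn n x \<in> {b..}} =
     (\<integral>\<^sup>+p. ennreal (laplace_const n * exp (- (real n - 2) * rate_AT 1 p) * AT_weight 1 p)
       * indicator {p. b \<le> fst p + snd p} p \<partial>lborel)) sequentially"
    using eventually_ge_at_top[of 3]
    by eventually_elim (subst Pn_tail_eq_nn_integral, simp_all add: AT_density_eq)
qed

definition second_moment_weight :: "real \<Rightarrow> real \<times> real \<Rightarrow> real" where
  "second_moment_weight \<theta> p = AT_weight \<theta> p * exp (- 4 * (1 - \<theta>) * fst p)"

lemma second_moment_weight_le_AT_weight:
  assumes "0 < \<theta>" "\<theta> < 1"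
  shows "second_moment_weight \<theta> p \<le> AT_weight \<theta> p"
proof (cases "AT_weight \<theta> p = 0")
  case False
  then have "0 \<le> 4 * (1 - \<theta>) * fst p"
    using AT_weight_nonzero_imp[OF False] assms by (intro mult_nonneg_nonneg) auto
  then have "exp (- 4 * (1 - \<theta>) * fst p) \<le> 1"
    by (simp only: exp_le_one_iff mult_minus_left neg_le_0_iff_le)
  then show ?thesis
    unfolding second_moment_weight_def using AT_weight_nonneg[OF assms(1), of p] by (simp add: mult_left_le)
qed (simp add: second_moment_weight_def)

lemma AT_density_mult_lr_sq:
  assumes "3 \<le> n" "0 < \<theta>"
  shows "AT_density \<theta> n p * (exp (- (1 - \<theta>) * (real n * fst p)) / \<theta> ^ (n - 1))\<^sup>2 =
     laplace_const n / \<theta>\<^sup>2 * exp (- (real n - 2) * second_moment_rate_AT \<theta> p) * second_moment_weight \<theta> p"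
proof -
  define k where "k = n - 2"
  have nk: "real n - 2 = real k" "n - 1 = k + 1" "real n = real k + 2" using assms by (auto simp: k_def)
  let ?a = "fst p"
  have "exp (2 * real k * ln \<theta>) = \<theta> ^ (2 * k)"
    using exp_of_nat_mult[of "2 * k" "ln \<theta>"] assms by simp
  moreover have "- (real n - 2) * second_moment_rate_AT \<theta> p =
      - (real n - 2) * rate_AT \<theta> p + (- 2 * real k * (1 - \<theta>) * ?a) - 2 * real k * ln \<theta>"
    unfolding second_moment_rate_AT_def nk by (simp add: algebra_simps)
  ultimately have e1: "exp (- (real n - 2) * second_moment_rate_AT \<theta> p) =
      exp (- (real n - 2) * rate_AT \<theta> p) * exp (- 2 * real k * (1 - \<theta>) * ?a) / \<theta> ^ (2 * k)"
    by (simp only: exp_add exp_diff)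
  have "(exp (- (1 - \<theta>) * (real n * ?a)))\<^sup>2 = exp (- 2 * real k * (1 - \<theta>) * ?a) * exp (- 4 * (1 - \<theta>) * ?a)"
    unfolding power2_eq_square exp_add[symmetric] nk by (simp add: algebra_simps)
  moreover have "(\<theta> ^ (n - 1))\<^sup>2 = \<theta> ^ (2 * k) * \<theta>\<^sup>2"
    unfolding nk by (simp add: power_add[symmetric] power_mult[symmetric] algebra_simps)
  ultimately have e2: "(exp (- (1 - \<theta>) * (real n * ?a)) / \<theta> ^ (n - 1))\<^sup>2 =
      exp (- 2 * real k * (1 - \<theta>) * ?a) * exp (- 4 * (1 - \<theta>) * ?a) / \<theta> ^ (2 * k) / \<theta>\<^sup>2"
    by (simp add: power_divide)
  show ?thesis
    unfolding AT_density_eq[OF assms] e1 e2 second_moment_weight_def by (simp add: field_simps)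
qed

lemma tendsto_ln_laplace_const_div:
  assumes "0 < c"
  shows "((\<lambda>n. ln (laplace_const n / c) / real n) \<longlongrightarrow> 0) sequentially"
proof -
  have "((\<lambda>n. ln (laplace_const n) / real n - ln c / real n) \<longlongrightarrow> 0 - 0) sequentially"
    by (intro tendsto_diff tendsto_ln_laplace_const tendsto_divide_0[OF tendsto_const]
        filterlim_at_top_imp_at_infinity filterlim_real_sequentially)
  moreover have "ln (laplace_const n / c) / real n = ln (laplace_const n) / real n - ln c / real n" for n
    using laplace_const_pos[of n] assms by (simp add: ln_div diff_divide_distrib)
  ultimately show ?thesis by simp
qed

lemma nn_integral_second_moment_weight_le_1:
  assumes "0 < \<theta>" "\<theta> < 1"
  shows "(\<integral>\<^sup>+p. ennreal (second_moment_weight \<theta> p) \<partial>lborel) \<le> 1"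
proof -
  have "(\<integral>\<^sup>+p. ennreal (second_moment_weight \<theta> p) \<partial>lborel) \<le> (\<integral>\<^sup>+p. ennreal (AT_weight \<theta> p) \<partial>lborel)"
    using second_moment_weight_le_AT_weight[OF assms] by (intro nn_integral_mono ennreal_leI)
  then show ?thesis
    using nn_integral_AT_weight_le_1[OF assms(1)] by order
qed

lemma borel_measurable_second_moment_weight[measurable]: "second_moment_weight \<theta> \<in> borel_measurable borel"
proof -
  have "(\<lambda>p. exp (- 4 * (1 - \<theta>) * fst p)) \<in> borel_measurable borel"
    by (intro borel_measurable_continuous_onI continuous_intros)
  then show ?thesis
    unfolding second_moment_weight_def[abs_def] by (rule borel_measurable_times[OF borel_measurable_AT_weight])
qed

lemma isCont_second_moment_weight:
  "0 < fst p \<Longrightarrow> 0 < snd p \<Longrightarrow> isCont (second_moment_weight \<theta>) p"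
  unfolding second_moment_weight_def[abs_def] by (intro continuous_intros isCont_AT_weight)

lemma nn_integral_Ln_sq_tail_eq_laplace:
  assumes "0 < \<theta>" "3 \<le> n"
  shows "(\<integral>\<^sup>+ x. (Ln \<theta> n x)\<^sup>2 * indicator {x. Mn n x \<in> {b..}} x \<partial>Qn \<theta> n) =
     (\<integral>\<^sup>+p. ennreal (laplace_const n / \<theta>\<^sup>2 * exp (- (real n - 2) * second_moment_rate_AT \<theta> p)
       * second_moment_weight \<theta> p) * indicator {p. b \<le> fst p + snd p} p \<partial>lborel)"
proof -
  have eq0: "ennreal (AT_density \<theta> n p) * ennreal ((exp (- (1 - \<theta>) * (real n * fst p)) / \<theta> ^ (n - 1))\<^sup>2) =
      ennreal (laplace_const n / \<theta>\<^sup>2 * exp (- (real n - 2) * second_moment_rate_AT \<theta> p)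
        * second_moment_weight \<theta> p)" for p
    using AT_density_mult_lr_sq[OF assms(2,1), of p] assms(1)
    by (simp add: ennreal_mult[symmetric] AT_density_def)
  have eq: "ennreal (AT_density \<theta> n p) * (ennreal ((exp (- (1 - \<theta>) * (real n * fst p)) / \<theta> ^ (n - 1))\<^sup>2)
      * indicator {p. b \<le> fst p + snd p} p) =
      ennreal (laplace_const n / \<theta>\<^sup>2 * exp (- (real n - 2) * second_moment_rate_AT \<theta> p)
        * second_moment_weight \<theta> p) * indicator {p. b \<le> fst p + snd p} p" for p
    by (simp only: mult.assoc[symmetric, of "ennreal (AT_density \<theta> n p)"] eq0)
  have "2 \<le> n" using assms by simp
  then show ?thesis
    by (simp only: nn_integral_Ln_sq_tail[OF assms(1)] eq)
qed

lemma tendsto_second_moment: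
  assumes \<theta>: "0 < \<theta>" "\<theta> < 1" and "1 < b"
  shows "((\<lambda>n. - eln (\<integral>\<^sup>+ x. (Ln \<theta> n x)\<^sup>2 * indicator {x. Mn n x \<in> {b..}} x \<partial>Qn \<theta> n) / ereal (real n))
     \<longlongrightarrow> ereal (second_moment_rate \<theta> b)) sequentially"
proof (rule tendsto_eln_laplace[where C = "\<lambda>n. laplace_const n / \<theta>\<^sup>2" and K = "second_moment_rate_AT \<theta>"
      and h = "second_moment_weight \<theta>" and D = "{p. b \<le> fst p + snd p}"])
  show "\<And>n. 0 < laplace_const n / \<theta>\<^sup>2" using laplace_const_pos \<theta> by simp
  show "((\<lambda>n. ln (laplace_const n / \<theta>\<^sup>2) / real n) \<longlongrightarrow> 0) sequentially"
    using \<theta> by (intro tendsto_ln_laplace_const_div) simp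
  show "\<And>p. 0 \<le> second_moment_weight \<theta> p"
    using AT_weight_nonneg[OF \<theta>(1)] by (simp add: second_moment_weight_def)
  show "second_moment_weight \<theta> \<in> borel_measurable lborel" by simp
  show "(\<integral>\<^sup>+p. ennreal (second_moment_weight \<theta> p) \<partial>lborel) \<le> 1"
    by (rule nn_integral_second_moment_weight_le_1[OF \<theta>])
  show "second_moment_rate \<theta> b \<le> second_moment_rate_AT \<theta> p"
    if "p \<in> {p. b \<le> fst p + snd p}" "second_moment_weight \<theta> p \<noteq> 0" for p
    using that second_moment_rate_le[OF \<theta> \<open>1 < b\<close>, of "fst p" "snd p"] AT_weight_nonzero_imp
    by (auto simp: second_moment_weight_def)
  fix \<epsilon> :: real assume "0 < \<epsilon>"
  obtain a t where at: "0 < a" "0 \<le> t" "b \<le> a + t" "second_moment_rate_AT \<theta> (a, t) = second_moment_rate \<theta> b"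
    using second_moment_rate_attained[OF \<theta> \<open>1 < b\<close>] by blast
  have "second_moment_rate_AT \<theta> (a, t + \<epsilon>) = second_moment_rate \<theta> b + \<epsilon>"
    using at(4) by (simp add: second_moment_rate_AT_def rate_AT_def)
  then show "\<exists>p0 U. open U \<and> p0 \<in> U \<and> U \<subseteq> {p. b \<le> fst p + snd p} \<and> isCont (second_moment_rate_AT \<theta>) p0 \<and>
      isCont (second_moment_weight \<theta>) p0 \<and> 0 < second_moment_weight \<theta> p0 \<and>
      second_moment_rate_AT \<theta> p0 \<le> second_moment_rate \<theta> b + \<epsilon>"
    using at \<theta> \<open>0 < \<epsilon>\<close> open_tail_region[of b]
    by (intro exI[of _ "(a, t + \<epsilon>)"] exI[of _ "{p. b < fst p + snd p \<and> 0 < fst p \<and> 0 < snd p}"])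
      (auto simp: second_moment_weight_def intro!: isCont_second_moment_rate_AT isCont_second_moment_weight
        AT_weight_pos mult_pos_pos)
next
  show "eventually (\<lambda>n. (\<integral>\<^sup>+ x. (Ln \<theta> n x)\<^sup>2 * indicator {x. Mn n x \<in> {b..}} x \<partial>Qn \<theta> n) =
     (\<integral>\<^sup>+p. ennreal (laplace_const n / \<theta>\<^sup>2 * exp (- (real n - 2) * second_moment_rate_AT \<theta> p)
       * second_moment_weight \<theta> p) * indicator {p. b \<le> fst p + snd p} p \<partial>lborel)) sequentially"
    using eventually_ge_at_top[of 3] by eventually_elim (rule nn_integral_Ln_sq_tail_eq_laplace[OF \<theta>(1)])
qed

lemma asymp_efficient_iff_rates:
  assumes "0 < \<theta>" "\<theta> < 1" "1 < b"
  shows "asymp_efficient \<theta> b \<longleftrightarrow> second_moment_rate \<theta> b = 2 * tail_rate b"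
proof
  assume "asymp_efficient \<theta> b"
  then obtain r s where rs:
    "((\<lambda>n. - eln (\<integral>\<^sup>+ x. (Ln \<theta> n x)\<^sup>2 * indicator {x. Mn n x \<in> {b..}} x \<partial>Qn \<theta> n) / ereal (real n))
       \<longlongrightarrow> r) sequentially"
    "((\<lambda>n. - eln (emeasure (Pn n) {x \<in> space (Pn n). Mn n x \<in> {b..}}) / ereal (real n)) \<longlongrightarrow> s) sequentially"
    "r = 2 * s"
    unfolding asymp_efficient_def by blast
  have "r = ereal (second_moment_rate \<theta> b)" "s = ereal (tail_rate b)"
    using tendsto_unique[OF _ rs(1) tendsto_second_moment[OF assms]]
      tendsto_unique[OF _ rs(2) tendsto_Pn_tail[OF assms(3)]] by simp_all
  then show "second_moment_rate \<theta> b = 2 * tail_rate b" using rs(3) by simp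
next
  assume "second_moment_rate \<theta> b = 2 * tail_rate b"
  then show "asymp_efficient \<theta> b"
    unfolding asymp_efficient_def using tendsto_second_moment[OF assms] tendsto_Pn_tail[OF assms(3)]
    by (intro exI[of _ "ereal (second_moment_rate \<theta> b)"] exI[of _ "ereal (tail_rate b)"]) simp
qed

theorem mainTheorem6:
  fixes b \<theta> :: real
  assumes "b > 1" and "0 < \<theta>" and "\<theta> < 1"
  shows "LDP (lawMW \<theta>) (JQ \<theta>)
    \<and> (\<forall>m w. JQ \<theta> (m, w) = 0 \<longleftrightarrow> (m, w) = (1 / \<theta>, (1 - \<theta>) / \<theta> + ln \<theta>))
    \<and> (asymp_efficient \<theta> b \<longleftrightarrow> (\<theta> = 1 / b \<and> b \<le> 2))
    \<and> (\<theta> = 1 / b \<longrightarrow>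
         ((\<lambda>w. real_of_ereal (IQB \<theta> b w)) has_real_derivative (- 1 - 1 / (b - 1)))
           (at ((1 - \<theta>) / \<theta> + ln \<theta>) within {..(1 - \<theta>) / \<theta> + ln \<theta>}))"
  using LDP_lawMW[OF assms(2,3)] JQ_eq_0_iff[OF assms(2,3)]
    asymp_efficient_iff_rates[OF assms(2,3,1)] second_moment_rate_eq_twice_tail_rate_iff[OF assms(2,3,1)]
    IQB_has_left_derivative[OF assms(1)]
  by simp

end
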